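(* Let $V=L^2(\mathbb R)\times L^2(\mathbb R)$ (real), $\rho(x)=\{2\tanh^2(x/2)-1\}/4$, $\kappa(x)=\mathrm{sech}(x/2)$, and let $A$ be the operator $A(\phi,\psi)=(\phi''-\psi-\rho\phi,\ \psi''+\phi-\rho\psi)$ with domain $U=H^2(\mathbb R)\times H^2(\mathbb R)$; let $A_c$ be its complex-linear extension (domain $U_c$). Then (i) $A_c-i$ (from $U_c$ to $V_c$) is a Fredholm operator of index $0$; (ii) $\mathcal N(A_c-i)=\mathrm{span}\{\psi_\star\}$, where $\psi_\star=(\kappa,-i\kappa)$. *)

theory Defs
  imports "HOL-Analysis.Analysis"
begin

text \<open>V_c = L2 x L2 is represented by representatives (equality in V_c is a.e. equality);
  U_c = H2 x H2 is represented by the unique C^1 representatives.\<close>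

type_synonym cpair = "(real \<Rightarrow> complex) \<times> (real \<Rightarrow> complex)"

definition L2 :: "(real \<Rightarrow> complex) \<Rightarrow> bool" where
  "L2 f \<longleftrightarrow> f \<in> borel_measurable lebesgue \<and> integrable lebesgue (\<lambda>x. (norm (f x))^2)"

definition weak_dd :: "(real \<Rightarrow> complex) \<Rightarrow> (real \<Rightarrow> complex) \<Rightarrow> (real \<Rightarrow> complex) \<Rightarrow> bool" where
  "weak_dd f f1 f2 \<longleftrightarrow> (\<forall>x. (f has_vector_derivative f1 x) (at x)) \<and>
     (\<forall>a b. a \<le> b \<longrightarrow> (f2 has_integral (f1 b - f1 a)) {a..b})"

definition H2 :: "(real \<Rightarrow> complex) \<Rightarrow> bool" where
  "H2 f \<longleftrightarrow> L2 f \<and> (\<exists>f1 f2. weak_dd f f1 f2 \<and> L2 f1 \<and> L2 f2)"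

definition Vc :: "cpair set" where
  "Vc = {v. L2 (fst v) \<and> L2 (snd v)}"

definition Uc :: "cpair set" where
  "Uc = {u. H2 (fst u) \<and> H2 (snd u)}"

definition rho :: "real \<Rightarrow> real" where
  "rho x = (2 * (tanh (x/2))^2 - 1) / 4"

definition kappa :: "real \<Rightarrow> real" where
  "kappa x = 1 / cosh (x/2)"

text \<open>Graph of A_c - i : U_c \<rightarrow> V_c, where
  A(\<phi>,\<psi>) = (\<phi>'' - \<psi> - \<rho>\<phi>, \<psi>'' + \<phi> - \<rho>\<psi>); the image is determined up to a.e. equality.\<close>
definition Ac_minus_i :: "cpair \<Rightarrow> cpair \<Rightarrow> bool" where
  "Ac_minus_i u v \<longleftrightarrow> u \<in> Uc \<and> v \<in> Vc \<and>
     (\<exists>\<phi>1 \<phi>2 \<psi>1 \<psi>2. weak_dd (fst u) \<phi>1 \<phi>2 \<and> weak_dd (snd u) \<psi>1 \<psi>2 \<and>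
        (AE x in lebesgue.
           fst v x = \<phi>2 x - snd u x - complex_of_real (rho x) * fst u x - \<i> * fst u x \<and>
           snd v x = \<psi>2 x + fst u x - complex_of_real (rho x) * snd u x - \<i> * snd u x))"

definition zero_pair :: cpair where
  "zero_pair = (\<lambda>_. 0, \<lambda>_. 0)"

definition op_kernel :: "(cpair \<Rightarrow> cpair \<Rightarrow> bool) \<Rightarrow> cpair set" where
  "op_kernel T = {u. T u zero_pair}"

definition op_range :: "(cpair \<Rightarrow> cpair \<Rightarrow> bool) \<Rightarrow> cpair set" where
  "op_range T = {v. \<exists>u. T u v}"

definition lincomb :: "(nat \<Rightarrow> complex) \<Rightarrow> (nat \<Rightarrow> cpair) \<Rightarrow> nat \<Rightarrow> cpair" where
  "lincomb c b n = (\<lambda>x. \<Sum>j<n. c j * fst (b j) x, \<lambda>x. \<Sum>j<n. c j * snd (b j) x)"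

definition has_dim :: "cpair set \<Rightarrow> nat \<Rightarrow> bool" where
  "has_dim S n \<longleftrightarrow> (\<exists>b. (\<forall>j<n. b j \<in> S) \<and> (\<forall>u\<in>S. \<exists>c. u = lincomb c b n) \<and>
      (\<forall>c. lincomb c b n = zero_pair \<longrightarrow> (\<forall>j<n. c j = 0)))"

text \<open>R (closed under a.e. equality within V) has codimension m in V = V_c,
   i.e. dim (V / R) = m, where V is taken modulo a.e. equality\<close>
definition has_codim :: "cpair set \<Rightarrow> cpair set \<Rightarrow> nat \<Rightarrow> bool" where
  "has_codim R V m \<longleftrightarrow> (\<exists>e. (\<forall>j<m. e j \<in> V) \<and>
      (\<forall>v\<in>V. \<exists>c. \<exists>r\<in>R. AE x in lebesgue.
          fst v x = fst r x + fst (lincomb c e m) x \<and> snd v x = snd r x + snd (lincomb c e m) x) \<and>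
      (\<forall>c. lincomb c e m \<in> R \<longrightarrow> (\<forall>j<m. c j = 0)))"

definition l2dist2 :: "cpair \<Rightarrow> cpair \<Rightarrow> real" where
  "l2dist2 u v = integral\<^sup>L lebesgue
     (\<lambda>x. (norm (fst u x - fst v x))^2 + (norm (snd u x - snd v x))^2)"

definition L2_closed :: "cpair set \<Rightarrow> cpair set \<Rightarrow> bool" where
  "L2_closed R V \<longleftrightarrow> (\<forall>v\<in>V. \<forall>s. (\<forall>n. s n \<in> R) \<and> (\<lambda>n. l2dist2 (s n) v) \<longlonglongrightarrow> 0 \<longrightarrow> v \<in> R)"

definition fredholm :: "(cpair \<Rightarrow> cpair \<Rightarrow> bool) \<Rightarrow> cpair set \<Rightarrow> cpair set \<Rightarrow> bool" where
  "fredholm T U V \<longleftrightarrow> (\<forall>u v. T u v \<longrightarrow> u \<in> U \<and> v \<in> V) \<and>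
     (\<exists>n. has_dim (op_kernel T) n) \<and> L2_closed (op_range T) V \<and>
     (\<exists>m. has_codim (op_range T) V m)"

definition fredholm_index :: "(cpair \<Rightarrow> cpair \<Rightarrow> bool) \<Rightarrow> cpair set \<Rightarrow> int \<Rightarrow> bool" where
  "fredholm_index T V k \<longleftrightarrow> (\<exists>n m. has_dim (op_kernel T) n \<and> has_codim (op_range T) V m \<and>
      k = int n - int m)"

end

theory Submission
  imports Defs "HOL-Real_Asymp.Real_Asymp"
begin

text \<open>
  The substitution \<open>w\<^sub>\<plusminus> = \<phi> \<plusminus> i \<psi>\<close> turns \<open>A\<^sub>c - i\<close> into the two scalar operators
  \<open>w \<mapsto> w'' - \<rho> w\<close> and \<open>w \<mapsto> w'' - (\<rho> + 2i) w\<close>.  Since \<open>\<kappa>'' = \<rho> \<kappa>\<close>, the first one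
  annihilates \<open>\<kappa>\<close>; a Wronskian argument shows that \<open>\<kappa>\<close> spans its \<open>L\<^sup>2\<close> kernel and that
  \<open>\<langle>\<kappa>, h\<rangle> = 0\<close> is necessary for \<open>w'' - \<rho> w = h\<close>.  For the second one \<open>Im (conj w w')\<close> is
  non-decreasing, so its kernel is trivial.  Both equations are solved in \<open>H\<^sup>2\<close> by reduction of
  order, using \<open>\<kappa>\<close> and the Jost solution \<open>(tanh (x/2) + k) e\<^sup>-\<^sup>k\<^sup>x\<^sup>/\<^sup>2\<close> (\<open>k\<^sup>2 = 1 + 8i\<close>);
  every quantity involved is dominated by a convolution of the data with a multiple of \<open>\<kappa>\<close>,
  which maps \<open>L\<^sup>2\<close> into \<open>L\<^sup>2\<close>.  So the kernel of \<open>A\<^sub>c - i\<close> is spanned by \<open>(\<kappa>, -i\<kappa>)\<close> and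
  its range is the closed hyperplane \<open>\<langle>\<kappa>, v\<^sub>1 + i v\<^sub>2\<rangle> = 0\<close>, of codimension one.
\<close>

definition tau :: "real \<Rightarrow> real" where
  "tau x = tanh (x / 2)"

definition dkappa :: "real \<Rightarrow> real" where
  "dkappa x = - tau x * kappa x / 2"

definition ckappa :: "real \<Rightarrow> complex" where
  "ckappa x = complex_of_real (kappa x)"

lemma kappa_pos: "kappa x > 0"
  by (simp add: kappa_def)

lemma kappa_nonneg [simp]: "0 \<le> kappa x"
  using kappa_pos[of x] by simp

lemma kappa_le_1: "kappa x \<le> 1"
  using cosh_real_ge_1[of "x / 2"] by (simp add: kappa_def)

lemma kappa_minus: "kappa (- x) = kappa x"
  by (simp add: kappa_def)

lemma ckappa_nonzero: "ckappa x \<noteq> 0"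
  using kappa_pos[of x] by (simp add: ckappa_def)

lemma tau_sq_plus_kappa_sq: "tau x ^ 2 + kappa x ^ 2 = 1"
  unfolding tau_def kappa_def
  by (smt (verit, ccfv_threshold) add_divide_distrib cosh_square_eq
    divide_self_if power_divide sum_power2_eq_zero_iff tanh_def)

lemma abs_tau_le_1: "\<bar>tau x\<bar> \<le> 1"
proof -
  have "tau x ^ 2 \<le> 1"
    by (metis tau_sq_plus_kappa_sq le_add_same_cancel1 zero_le_power2)
  then show ?thesis by (simp add: abs_square_le_1)
qed

lemma rho_eq_kappa: "rho x = 1/4 - kappa x ^ 2 / 2"
  using tau_sq_plus_kappa_sq[of x] unfolding rho_def tau_def[symmetric] by (simp add: field_simps)

lemma abs_rho_le_1: "\<bar>rho x\<bar> \<le> 1"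
proof -
  have "0 \<le> kappa x ^ 2" "kappa x ^ 2 \<le> 1"
    using power_le_one[OF kappa_nonneg kappa_le_1] by auto
  then show ?thesis unfolding rho_eq_kappa abs_le_iff by (intro conjI; linarith)
qed

lemma abs_dkappa_le_kappa: "\<bar>dkappa x\<bar> \<le> kappa x"
proof -
  have "\<bar>tau x\<bar> * kappa x \<le> kappa x"
    using mult_right_mono[OF abs_tau_le_1[of x] kappa_nonneg[of x]] by simp
  moreover have "\<bar>dkappa x\<bar> = \<bar>tau x\<bar> * kappa x / 2"
    by (simp add: dkappa_def abs_mult)
  ultimately show ?thesis using kappa_nonneg[of x] by linarith
qed

lemma has_real_derivative_half: "((\<lambda>x::real. x / 2) has_real_derivative 1 / 2) (at x)"
  by (auto intro!: derivative_eq_intros)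

lemma has_real_derivative_tau: "(tau has_real_derivative kappa x ^ 2 / 2) (at x)"
proof -
  have "((\<lambda>x. tanh (x / 2)) has_real_derivative (1 - tanh (x / 2) ^ 2) * (1 / 2)) (at x)"
    by (rule has_field_derivative_tanh[OF _ has_real_derivative_half]) simp
  moreover have "(1 - tanh (x / 2) ^ 2) * (1 / 2) = kappa x ^ 2 / 2"
    using tau_sq_plus_kappa_sq[of x] unfolding tau_def by simp
  ultimately show ?thesis unfolding tau_def[abs_def] by (rule DERIV_cong)
qed

lemma has_real_derivative_kappa: "(kappa has_real_derivative dkappa x) (at x)"
proof -
  have "((\<lambda>x. inverse (cosh (x / 2))) has_real_derivative
      - ((sinh (x / 2) * (1 / 2)) * inverse (cosh (x / 2) ^ Suc (Suc 0)))) (at x)"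
    by (rule DERIV_inverse_fun[OF has_field_derivative_cosh[OF has_real_derivative_half]])
      (simp add: cosh_real_nonzero)
  moreover have "- ((sinh (x / 2) * (1 / 2)) * inverse (cosh (x / 2) ^ Suc (Suc 0))) = dkappa x"
    unfolding dkappa_def tau_def kappa_def tanh_def by (simp add: field_simps power2_eq_square)
  moreover have "kappa = (\<lambda>x. inverse (cosh (x / 2)))"
    by (simp add: fun_eq_iff kappa_def inverse_eq_divide)
  ultimately show ?thesis by simp
qed

lemma has_real_derivative_dkappa: "(dkappa has_real_derivative rho x * kappa x) (at x)"
proof -
  have "((\<lambda>x. - tau x * kappa x / 2) has_real_derivative
      (- (kappa x ^ 2 / 2) * kappa x + dkappa x * - tau x) / 2) (at x)"
    by (intro DERIV_cdivide DERIV_mult DERIV_minus has_real_derivative_tau has_real_derivative_kappa)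
  moreover have "(- (kappa x ^ 2 / 2) * kappa x + dkappa x * - tau x) / 2 = rho x * kappa x"
  proof -
    have rho: "rho x = (tau x ^ 2 - kappa x ^ 2) / 4"
      using tau_sq_plus_kappa_sq[of x] unfolding rho_eq_kappa by (simp add: field_simps)
    show ?thesis unfolding rho dkappa_def by (simp add: field_simps power2_eq_square)
  qed
  ultimately show ?thesis unfolding dkappa_def[abs_def] by simp
qed

lemma has_vector_derivative_ckappa:
  "(ckappa has_vector_derivative complex_of_real (dkappa x)) (at x)"
  unfolding ckappa_def[abs_def] by (rule has_vector_derivative_of_real[OF has_real_derivative_kappa])

lemma has_vector_derivative_dkappa:
  "((\<lambda>x. complex_of_real (dkappa x)) has_vector_derivative
     complex_of_real (rho x) * ckappa x) (at x)"
  using has_vector_derivative_of_real[OF has_real_derivative_dkappa] by (simp add: ckappa_def)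

lemma continuous_on_kappa: "continuous_on A kappa"
  unfolding kappa_def by (intro continuous_intros) auto

lemma continuous_on_tau: "continuous_on A tau"
  unfolding tau_def tanh_def
  by (intro continuous_intros) (auto simp: cosh_real_nonzero)

lemma continuous_on_dkappa: "continuous_on A dkappa"
  unfolding dkappa_def by (intro continuous_intros continuous_on_tau continuous_on_kappa) auto

lemma continuous_on_rho: "continuous_on A rho"
  unfolding rho_eq_kappa by (intro continuous_intros continuous_on_kappa) auto

lemma continuous_on_ckappa: "continuous_on A ckappa"
  unfolding ckappa_def by (intro continuous_intros continuous_on_kappa)

lemma exp_le_kappa: "exp (- \<bar>x\<bar> / 2) \<le> kappa x"
proof -
  have "cosh (x / 2) \<le> exp \<bar>x / 2\<bar>"
    unfolding cosh_field_def by (cases "x \<ge> 0") auto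
  then show ?thesis unfolding kappa_def by (simp add: exp_minus field_simps)
qed

text \<open>The hypothesis says that \<open>a\<close> lies between \<open>0\<close> and \<open>b\<close>.\<close>
lemma kappa_quotient_le:
  assumes "\<bar>a\<bar> + \<bar>a - b\<bar> \<le> \<bar>b\<bar>"
  shows "kappa b / kappa a \<le> 2 * kappa (a - b)"
proof -
  have "cosh (a / 2) \<le> exp \<bar>a / 2\<bar>" "exp \<bar>b / 2\<bar> / 2 \<le> cosh (b / 2)"
    unfolding cosh_field_def by (cases "a \<ge> 0"; cases "b \<ge> 0"; simp)+
  then have "cosh (a / 2) / cosh (b / 2) \<le> exp \<bar>a / 2\<bar> / (exp \<bar>b / 2\<bar> / 2)"
    by (intro frac_le) auto
  also have "\<dots> = 2 * exp (\<bar>a\<bar> / 2 - \<bar>b\<bar> / 2)" by (simp add: exp_diff)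
  also have "\<dots> \<le> 2 * exp (- \<bar>a - b\<bar> / 2)" using assms by simp
  also have "\<dots> \<le> 2 * kappa (a - b)" using exp_le_kappa by simp
  finally show ?thesis by (simp add: kappa_def)
qed

lemma borel_measurable_continuous_lebesgue:
  "continuous_on UNIV f \<Longrightarrow> f \<in> borel_measurable lebesgue"
  by (intro measurable_completion) (simp add: borel_measurable_continuous_onI)

lemma borel_measurable_ident_lebesgue: "(\<lambda>x::real. x) \<in> borel_measurable lebesgue"
  by (rule borel_measurable_continuous_lebesgue[OF continuous_on_id])

lemma set_integrable_complex_iff:
  "set_integrable M S f \<longleftrightarrow> integrable M (\<lambda>y. indicator S y * f y)" for f :: "_ \<Rightarrow> complex"
  unfolding set_integrable_def
  by (intro Bochner_Integration.integrable_cong) (auto simp: indicator_def)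

lemma set_lebesgue_integral_complex:
  "(LINT y:S|M. f y) = (\<integral>y. indicator S y * f y \<partial>M)" for f :: "_ \<Rightarrow> complex"
  unfolding set_lebesgue_integral_def
  by (intro Bochner_Integration.integral_cong) (auto simp: indicator_def)

lemma L2_borel_measurable: "L2 f \<Longrightarrow> f \<in> borel_measurable lebesgue"
  by (simp add: L2_def)

lemma L2_integrable_square: "L2 f \<Longrightarrow> integrable lebesgue (\<lambda>x. (norm (f x))\<^sup>2)"
  by (simp add: L2_def)

lemma integrable_mult_L2:
  assumes "L2 f" "L2 g"
  shows "integrable lebesgue (\<lambda>x. f x * g x)"
proof (rule Bochner_Integration.integrable_bound)
  show "integrable lebesgue (\<lambda>x. (norm (f x))\<^sup>2 + (norm (g x))\<^sup>2)"
    using assms by (simp add: L2_def)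
  show "(\<lambda>x. f x * g x) \<in> borel_measurable lebesgue"
    using assms by (auto simp: L2_def intro!: borel_measurable_times)
  have "norm (f x) * norm (g x) \<le> (norm (f x))\<^sup>2 + (norm (g x))\<^sup>2" for x
  proof -
    have "0 \<le> (norm (f x) - norm (g x))\<^sup>2" "0 \<le> norm (f x) * norm (g x)" by simp_all
    then show ?thesis unfolding power2_diff by linarith
  qed
  then show "AE x in lebesgue. norm (f x * g x) \<le> norm ((norm (f x))\<^sup>2 + (norm (g x))\<^sup>2)"
    by (auto simp: norm_mult)
qed

lemma L2_dominated:
  assumes "L2 f" "g \<in> borel_measurable lebesgue" "AE x in lebesgue. norm (g x) \<le> B * norm (f x)"
  shows "L2 g"
  unfolding L2_def
proof
  show "integrable lebesgue (\<lambda>x. (norm (g x))\<^sup>2)"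
  proof (rule Bochner_Integration.integrable_bound)
    show "integrable lebesgue (\<lambda>x. B\<^sup>2 * (norm (f x))\<^sup>2)"
      using assms by (simp add: L2_def)
    show "(\<lambda>x. (norm (g x))\<^sup>2) \<in> borel_measurable lebesgue"
      using assms(2) by measurable
    show "AE x in lebesgue. norm ((norm (g x))\<^sup>2) \<le> norm (B\<^sup>2 * (norm (f x))\<^sup>2)"
      using assms(3)
    proof eventually_elim
      case (elim x)
      then have "(norm (g x))\<^sup>2 \<le> (B * norm (f x))\<^sup>2" by (intro power_mono) auto
      then show ?case by (simp add: power_mult_distrib)
    qed
  qed
qed fact

lemma L2_zero: "L2 (\<lambda>x. 0)"
  by (simp add: L2_def)

lemma L2_add:
  assumes "L2 f" "L2 g"
  shows "L2 (\<lambda>x. f x + g x)"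
  unfolding L2_def
proof
  have [measurable]: "f \<in> borel_measurable lebesgue" "g \<in> borel_measurable lebesgue"
    using assms by (auto simp: L2_def)
  show "(\<lambda>x. f x + g x) \<in> borel_measurable lebesgue" by measurable
  show "integrable lebesgue (\<lambda>x. (norm (f x + g x))\<^sup>2)"
  proof (rule Bochner_Integration.integrable_bound)
    show "integrable lebesgue (\<lambda>x. 2 * ((norm (f x))\<^sup>2 + (norm (g x))\<^sup>2))"
      using assms by (simp add: L2_def)
    show "(\<lambda>x. (norm (f x + g x))\<^sup>2) \<in> borel_measurable lebesgue" by measurable
    have "(norm (f x + g x))\<^sup>2 \<le> 2 * ((norm (f x))\<^sup>2 + (norm (g x))\<^sup>2)" for x
    proof -
      have "(norm (f x + g x))\<^sup>2 \<le> (norm (f x) + norm (g x))\<^sup>2"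
        by (intro power_mono norm_triangle_ineq) auto
      also have "\<dots> \<le> 2 * ((norm (f x))\<^sup>2 + (norm (g x))\<^sup>2)"
        using zero_le_power2[of "norm (f x) - norm (g x)"] by (simp add: power2_sum power2_diff)
      finally show ?thesis .
    qed
    then show "AE x in lebesgue.
        norm ((norm (f x + g x))\<^sup>2) \<le> norm (2 * ((norm (f x))\<^sup>2 + (norm (g x))\<^sup>2))"
      by simp
  qed
qed

lemma L2_cmult: "L2 f \<Longrightarrow> L2 (\<lambda>x. c * f x)"
  by (rule L2_dominated[where B = "norm c"]) (auto simp: L2_def norm_mult)

lemma L2_diff: "L2 f \<Longrightarrow> L2 g \<Longrightarrow> L2 (\<lambda>x. f x - g x)"
  using L2_add[of f "\<lambda>x. -1 * g x"] L2_cmult[of g "-1"] by simp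

lemma L2_lincomb: "L2 f \<Longrightarrow> L2 g \<Longrightarrow> L2 (\<lambda>x. a * f x + b * g x)"
  by (intro L2_add L2_cmult)

lemma L2_mult_bounded:
  assumes "L2 f" "g \<in> borel_measurable lebesgue" "\<And>x. norm (g x) \<le> B"
  shows "L2 (\<lambda>x. g x * f x)"
proof (rule L2_dominated[where B = B])
  show "(\<lambda>x. g x * f x) \<in> borel_measurable lebesgue"
    using assms by (auto simp: L2_def intro!: borel_measurable_times)
  show "AE x in lebesgue. norm (g x * f x) \<le> B * norm (f x)"
    using assms(3) by (auto simp: norm_mult intro!: mult_right_mono)
qed fact

lemma L2_cnj:
  assumes "L2 f"
  shows "L2 (\<lambda>x. cnj (f x))"
proof (rule L2_dominated[OF assms, where B = 1])
  have "cnj \<in> borel_measurable borel"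
    by (intro borel_measurable_continuous_onI continuous_intros)
  then show "(\<lambda>x. cnj (f x)) \<in> borel_measurable lebesgue"
    by (rule measurable_compose[OF L2_borel_measurable[OF assms]])
qed simp

lemma set_integrable_L2:
  assumes "L2 f"
  shows "set_integrable lebesgue {a..b} f"
proof -
  have "integrable lebesgue (indicator {a..b} :: real \<Rightarrow> real)"
    by (rule integrable_real_indicator) (simp_all add: emeasure_lborel_Icc_eq)
  moreover have "(\<lambda>x. (norm (indicator {a..b} x :: complex))\<^sup>2) = indicator {a..b}"
    by (auto simp: fun_eq_iff indicator_def)
  moreover have "(indicator {a..b} :: real \<Rightarrow> complex) \<in> borel_measurable lebesgue"
    by (intro measurable_completion borel_measurable_indicator) simp
  ultimately have "L2 (\<lambda>x. indicator {a..b} x :: complex)"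
    unfolding L2_def by simp
  from integrable_mult_L2[OF this assms] show ?thesis
    by (simp add: set_integrable_complex_iff)
qed

lemma L2_Cauchy_Schwarz:
  assumes f: "L2 f" and g: "L2 g"
  shows "(norm (\<integral>x. f x * g x \<partial>lebesgue))\<^sup>2 \<le>
    (\<integral>x. (norm (f x))\<^sup>2 \<partial>lebesgue) * (\<integral>x. (norm (g x))\<^sup>2 \<partial>lebesgue)"
proof -
  have [measurable]: "f \<in> borel_measurable lebesgue" "g \<in> borel_measurable lebesgue"
    using f g by (auto simp: L2_def)
  define P where "P = (\<integral>x. norm (f x) * norm (g x) \<partial>lebesgue)"
  define A where "A = (\<integral>x. (norm (f x))\<^sup>2 \<partial>lebesgue)"
  define B where "B = (\<integral>x. (norm (g x))\<^sup>2 \<partial>lebesgue)"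
  have fg: "integrable lebesgue (\<lambda>x. norm (f x) * norm (g x))"
    using integrable_norm[OF integrable_mult_L2[OF f g]] by (simp add: norm_mult)
  have "ennreal P = (\<integral>\<^sup>+x. ennreal (norm (f x)) * ennreal (norm (g x)) \<partial>lebesgue)"
    unfolding P_def by (subst nn_integral_eq_integral[symmetric]) (auto simp: fg ennreal_mult)
  moreover have "ennreal A = (\<integral>\<^sup>+x. (ennreal (norm (f x)))\<^sup>2 \<partial>lebesgue)"
    unfolding A_def
    by (subst nn_integral_eq_integral[symmetric]) (auto simp: L2_integrable_square[OF f] ennreal_power)
  moreover have "ennreal B = (\<integral>\<^sup>+x. (ennreal (norm (g x)))\<^sup>2 \<partial>lebesgue)"
    unfolding B_def
    by (subst nn_integral_eq_integral[symmetric]) (auto simp: L2_integrable_square[OF g] ennreal_power)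
  ultimately have "(ennreal P)\<^sup>2 \<le> ennreal A * ennreal B"
    by (simp only:) (rule Cauchy_Schwarz_nn_integral; measurable)
  moreover have "0 \<le> P" "0 \<le> A" "0 \<le> B"
    unfolding P_def A_def B_def by auto
  ultimately have "P\<^sup>2 \<le> A * B"
    by (simp add: ennreal_power ennreal_mult[symmetric] ennreal_le_iff)
  moreover have "norm (\<integral>x. f x * g x \<partial>lebesgue) \<le> P"
    unfolding P_def using integral_norm_bound[of lebesgue "\<lambda>x. f x * g x"] by (simp add: norm_mult)
  then have "(norm (\<integral>x. f x * g x \<partial>lebesgue))\<^sup>2 \<le> P\<^sup>2"
    by (intro power_mono) auto
  ultimately show ?thesis unfolding A_def B_def by linarith
qed

lemma borel_measurable_kappa [measurable]: "kappa \<in> borel_measurable borel"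
  using continuous_on_kappa by (rule borel_measurable_continuous_onI)

text \<open>\<open>2 arctan (sinh (x/2))\<close> is a primitive of \<open>kappa\<close>.\<close>
lemma nn_integral_kappa_nonneg_halfline: "(\<integral>\<^sup>+x. ennreal (kappa x) * indicator {0..} x \<partial>lborel) = pi"
proof -
  have "((\<lambda>x. 2 * arctan (sinh (x / 2))) has_real_derivative kappa x) (at x)" for x
  proof -
    have "((\<lambda>x. 2 * arctan (sinh (x / 2))) has_real_derivative
        2 * (inverse (1 + (sinh (x / 2))\<^sup>2) * (cosh (x / 2) * (1 / 2)))) (at x)"
      by (intro DERIV_cmult DERIV_chain2[OF DERIV_arctan]
          has_field_derivative_sinh[OF has_real_derivative_half])
    moreover have "2 * (inverse (1 + (sinh (x / 2))\<^sup>2) * (cosh (x / 2) * (1 / 2))) = kappa x"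
    proof -
      have "1 + (sinh (x / 2))\<^sup>2 = (cosh (x / 2))\<^sup>2"
        using cosh_square_eq[of "x / 2 :: real"] by simp
      then show ?thesis by (simp add: kappa_def field_simps power2_eq_square)
    qed
    ultimately show ?thesis by (rule DERIV_cong)
  qed
  then have "(\<integral>\<^sup>+x. ennreal (kappa x) * indicator {0..} x \<partial>lborel) =
      pi - (\<lambda>x. 2 * arctan (sinh (x / 2))) 0"
    by (intro nn_integral_FTC_atLeast) (auto, real_asymp)
  then show ?thesis by simp
qed

lemma nn_integral_kappa: "(\<integral>\<^sup>+x. ennreal (kappa x) \<partial>lborel) = 2 * pi"
proof -
  have "(\<integral>\<^sup>+x. ennreal (kappa x) * indicator {0..} x \<partial>lborel) =
      (\<integral>\<^sup>+x. ennreal (kappa x) * indicator {..0} x \<partial>lborel)"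
    using nn_integral_real_affine[of "\<lambda>x. ennreal (kappa x) * indicator {0..} x" "-1" 0]
    by (simp add: kappa_minus indicator_def)
  also have "\<dots> = (\<integral>\<^sup>+x. ennreal (kappa x) * indicator {..<0} x \<partial>lborel)"
    by (intro nn_integral_cong_AE)
      (auto simp: indicator_def intro!: eventually_mono[OF AE_lborel_singleton[of 0]])
  finally have left: "(\<integral>\<^sup>+x. ennreal (kappa x) * indicator {..<0} x \<partial>lborel) = pi"
    by (simp add: nn_integral_kappa_nonneg_halfline)
  have "(\<integral>\<^sup>+x. ennreal (kappa x) \<partial>lborel) =
      (\<integral>\<^sup>+x. ennreal (kappa x) * indicator {0..} x + ennreal (kappa x) * indicator {..<0} x \<partial>lborel)"
    by (intro nn_integral_cong) (auto simp: indicator_def)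
  also have "\<dots> = ennreal pi + ennreal pi"
    by (subst nn_integral_add) (auto simp: nn_integral_kappa_nonneg_halfline left)
  finally show ?thesis by (simp add: ennreal_plus[symmetric])
qed

lemma integrable_kappa: "integrable lborel kappa"
  by (rule integrableI_bounded) (auto simp: nn_integral_kappa)

lemma L2_ckappa: "L2 ckappa"
proof -
  have "integrable lebesgue kappa"
    using integrable_kappa by (simp add: integrable_completion)
  then have "integrable lebesgue (\<lambda>x. (norm (ckappa x))\<^sup>2)"
  proof (rule Bochner_Integration.integrable_bound)
    show "(\<lambda>x. (norm (ckappa x))\<^sup>2) \<in> borel_measurable lebesgue"
      by (intro borel_measurable_continuous_lebesgue continuous_intros continuous_on_ckappa)
    show "AE x in lebesgue. norm ((norm (ckappa x))\<^sup>2) \<le> norm (kappa x)"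
      using mult_left_mono[OF kappa_le_1 kappa_nonneg]
      by (auto simp: ckappa_def power2_eq_square)
  qed
  then show ?thesis
    unfolding L2_def
    by (auto intro: borel_measurable_continuous_lebesgue continuous_on_ckappa)
qed

lemma L2_dkappa: "L2 (\<lambda>x. complex_of_real (dkappa x))"
proof (rule L2_dominated[OF L2_ckappa, where B = 1])
  show "(\<lambda>x. complex_of_real (dkappa x)) \<in> borel_measurable lebesgue"
    by (intro borel_measurable_continuous_lebesgue continuous_intros continuous_on_dkappa)
  show "AE x in lebesgue. norm (complex_of_real (dkappa x)) \<le> 1 * norm (ckappa x)"
    using abs_dkappa_le_kappa by (auto simp: ckappa_def)
qed

lemma L2_rho_mult:
  "L2 f \<Longrightarrow> L2 (\<lambda>x. complex_of_real (rho x) * f x)"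
  by (rule L2_mult_bounded[where B = 1])
    (auto intro: borel_measurable_continuous_lebesgue continuous_intros continuous_on_rho
      simp: abs_rho_le_1)

lemma L2_translate_kappa: "L2 (\<lambda>y. complex_of_real (kappa (x - y)))"
proof -
  have "integrable lborel (\<lambda>y. kappa (x - y))"
    using lborel_integrable_real_affine[OF integrable_kappa, of "-1" x] by simp
  then have "integrable lebesgue (\<lambda>y. kappa (x - y))"
    by (simp add: integrable_completion)
  then have "integrable lebesgue (\<lambda>y. (norm (complex_of_real (kappa (x - y))))\<^sup>2)"
  proof (rule Bochner_Integration.integrable_bound)
    show "AE y in lebesgue. norm ((norm (complex_of_real (kappa (x - y))))\<^sup>2) \<le> norm (kappa (x - y))"
      using mult_left_mono[OF kappa_le_1 kappa_nonneg] by (auto simp: power2_eq_square)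
  qed (auto intro!: borel_measurable_continuous_lebesgue continuous_intros continuous_on_kappa
      [THEN continuous_on_compose2])
  then show ?thesis
    unfolding L2_def
    by (auto intro!: borel_measurable_continuous_lebesgue continuous_intros
        continuous_on_kappa[THEN continuous_on_compose2])
qed

section \<open>Convolution with an integrable kernel\<close>

lemma nn_integral_translate_reflect:
  fixes k :: "real \<Rightarrow> real"
  assumes [measurable]: "k \<in> borel_measurable borel"
  shows "(\<integral>\<^sup>+y. ennreal (k (x - y)) \<partial>lborel) = (\<integral>\<^sup>+t. ennreal (k t) \<partial>lborel)"
  using nn_integral_real_affine[of "\<lambda>t. ennreal (k t)" "-1" x] by simp

lemma nn_integral_translate:
  fixes k :: "real \<Rightarrow> real"
  assumes [measurable]: "k \<in> borel_measurable borel"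
  shows "(\<integral>\<^sup>+x. ennreal (k (x - y)) \<partial>lborel) = (\<integral>\<^sup>+t. ennreal (k t) \<partial>lborel)"
  using nn_integral_real_affine[of "\<lambda>t. ennreal (k t)" 1 "-y"] by simp

text \<open>Young's inequality; the pointwise step is Cauchy--Schwarz for the weight \<open>k (x - y)\<close>.\<close>
lemma nn_integral_convolution_square_le:
  fixes k :: "real \<Rightarrow> real" and H :: "real \<Rightarrow> ennreal"
  assumes [measurable]: "k \<in> borel_measurable borel" "H \<in> borel_measurable borel"
    and k_nonneg: "\<And>t. 0 \<le> k t"
  defines "K \<equiv> \<integral>\<^sup>+t. ennreal (k t) \<partial>lborel"
  shows "(\<integral>\<^sup>+x. (\<integral>\<^sup>+y. ennreal (k (x - y)) * H y \<partial>lborel)\<^sup>2 \<partial>lborel)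
    \<le> K * (K * (\<integral>\<^sup>+y. (H y)\<^sup>2 \<partial>lborel))"
proof -
  have pointwise: "(\<integral>\<^sup>+y. ennreal (k (x - y)) * H y \<partial>lborel)\<^sup>2
      \<le> K * (\<integral>\<^sup>+y. ennreal (k (x - y)) * (H y)\<^sup>2 \<partial>lborel)" for x
  proof -
    have sq: "ennreal (sqrt (k (x - y))) * ennreal (sqrt (k (x - y))) = ennreal (k (x - y))" for y
      using k_nonneg by (simp add: ennreal_mult[symmetric])
    have "(\<integral>\<^sup>+y. ennreal (k (x - y)) * H y \<partial>lborel)\<^sup>2 =
        (\<integral>\<^sup>+y. ennreal (sqrt (k (x - y))) * (ennreal (sqrt (k (x - y))) * H y) \<partial>lborel)\<^sup>2"
      by (simp add: sq mult.assoc[symmetric])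
    also have "\<dots> \<le> (\<integral>\<^sup>+y. (ennreal (sqrt (k (x - y))))\<^sup>2 \<partial>lborel) *
        (\<integral>\<^sup>+y. (ennreal (sqrt (k (x - y))) * H y)\<^sup>2 \<partial>lborel)"
      by (rule Cauchy_Schwarz_nn_integral) measurable
    also have "\<dots> = K * (\<integral>\<^sup>+y. ennreal (k (x - y)) * (H y)\<^sup>2 \<partial>lborel)"
      unfolding power_mult_distrib power2_eq_square[of "ennreal _"] sq
      by (simp add: K_def nn_integral_translate_reflect)
    finally show ?thesis .
  qed
  have "(\<integral>\<^sup>+x. (\<integral>\<^sup>+y. ennreal (k (x - y)) * H y \<partial>lborel)\<^sup>2 \<partial>lborel)
      \<le> (\<integral>\<^sup>+x. K * (\<integral>\<^sup>+y. ennreal (k (x - y)) * (H y)\<^sup>2 \<partial>lborel) \<partial>lborel)"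
    by (intro nn_integral_mono pointwise)
  also have "\<dots> = K * (\<integral>\<^sup>+x. (\<integral>\<^sup>+y. ennreal (k (x - y)) * (H y)\<^sup>2 \<partial>lborel) \<partial>lborel)"
    by (rule nn_integral_cmult) measurable
  also have "(\<integral>\<^sup>+x. (\<integral>\<^sup>+y. ennreal (k (x - y)) * (H y)\<^sup>2 \<partial>lborel) \<partial>lborel)
      = (\<integral>\<^sup>+y. (\<integral>\<^sup>+x. ennreal (k (x - y)) * (H y)\<^sup>2 \<partial>lborel) \<partial>lborel)"
    by (rule lborel_pair.Fubini'[symmetric]) measurable
  also have "\<dots> = (\<integral>\<^sup>+y. K * (H y)\<^sup>2 \<partial>lborel)"
  proof (rule nn_integral_cong)
    fix y
    have "(\<integral>\<^sup>+x. ennreal (k (x - y)) * (H y)\<^sup>2 \<partial>lborel) = (\<integral>\<^sup>+x. ennreal (k (x - y)) \<partial>lborel) * (H y)\<^sup>2"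
      by (rule nn_integral_multc) measurable
    then show "(\<integral>\<^sup>+x. ennreal (k (x - y)) * (H y)\<^sup>2 \<partial>lborel) = K * (H y)\<^sup>2"
      by (simp add: K_def nn_integral_translate)
  qed
  also have "(\<integral>\<^sup>+y. K * (H y)\<^sup>2 \<partial>lborel) = K * (\<integral>\<^sup>+y. (H y)\<^sup>2 \<partial>lborel)"
    by (rule nn_integral_cmult) measurable
  finally show ?thesis .
qed

lemma nn_integral_convolution_square_finite:
  fixes k :: "real \<Rightarrow> real" and H :: "real \<Rightarrow> ennreal"
  assumes k: "integrable lborel k" "\<And>t. 0 \<le> k t"
    and H: "H \<in> borel_measurable borel" "(\<integral>\<^sup>+y. (H y)\<^sup>2 \<partial>lborel) < \<infinity>"
  shows "(\<integral>\<^sup>+x. (\<integral>\<^sup>+y. ennreal (k (x - y)) * H y \<partial>lborel)\<^sup>2 \<partial>lborel) < \<infinity>"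
proof -
  have "(\<integral>\<^sup>+t. ennreal (k t) \<partial>lborel) < \<infinity>"
    using k by (simp add: integrable_iff_bounded)
  with H(2) have "(\<integral>\<^sup>+t. ennreal (k t) \<partial>lborel) *
      ((\<integral>\<^sup>+t. ennreal (k t) \<partial>lborel) * (\<integral>\<^sup>+y. (H y)\<^sup>2 \<partial>lborel)) < \<infinity>"
    by (simp add: ennreal_mult_less_top)
  moreover have "(\<integral>\<^sup>+x. (\<integral>\<^sup>+y. ennreal (k (x - y)) * H y \<partial>lborel)\<^sup>2 \<partial>lborel) \<le>
      (\<integral>\<^sup>+t. ennreal (k t) \<partial>lborel) *
      ((\<integral>\<^sup>+t. ennreal (k t) \<partial>lborel) * (\<integral>\<^sup>+y. (H y)\<^sup>2 \<partial>lborel))"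
    by (rule nn_integral_convolution_square_le) (use k H in auto)
  ultimately show ?thesis
    by (rule le_less_trans[rotated])
qed

definition nn_convolution :: "(real \<Rightarrow> real) \<Rightarrow> (real \<Rightarrow> complex) \<Rightarrow> real \<Rightarrow> ennreal" where
  "nn_convolution k h x = (\<integral>\<^sup>+y. ennreal (k (x - y) * norm (h y)) \<partial>lebesgue)"

lemma L2_nn_convolution_bound:
  fixes F h :: "real \<Rightarrow> complex" and k :: "real \<Rightarrow> real"
  assumes h: "L2 h" and k: "integrable lborel k" "\<And>t. 0 \<le> k t"
    and F: "F \<in> borel_measurable lebesgue" "\<And>x. ennreal (norm (F x)) \<le> nn_convolution k h x"
  shows "L2 F"
proof -
  have [measurable]: "k \<in> borel_measurable borel" and [measurable]: "h \<in> borel_measurable lebesgue"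
    using k h by (auto simp: L2_def)
  obtain H where H [measurable]: "H \<in> borel_measurable lborel"
    and HAE: "AE y in lborel. ennreal (norm (h y)) = H y"
    using completion_ex_borel_measurable[of "\<lambda>y. ennreal (norm (h y))" lborel] by auto
  have conv: "nn_convolution k h x = (\<integral>\<^sup>+y. ennreal (k (x - y)) * H y \<partial>lborel)" for x
    unfolding nn_convolution_def nn_integral_completion
    by (intro nn_integral_cong_AE) (use HAE k(2) in \<open>auto simp: ennreal_mult\<close>)
  have "(\<integral>\<^sup>+y. (H y)\<^sup>2 \<partial>lborel) = (\<integral>\<^sup>+y. ennreal (norm ((norm (h y))\<^sup>2)) \<partial>lebesgue)"
    unfolding nn_integral_completion
    by (intro nn_integral_cong_AE) (use HAE in \<open>auto simp: ennreal_power[symmetric]\<close>)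
  then have "(\<integral>\<^sup>+y. (H y)\<^sup>2 \<partial>lborel) < \<infinity>"
    using L2_integrable_square[OF h] by (simp add: integrable_iff_bounded)
  then have finite: "(\<integral>\<^sup>+x. (\<integral>\<^sup>+y. ennreal (k (x - y)) * H y \<partial>lborel)\<^sup>2 \<partial>lborel) < \<infinity>"
    by (rule nn_integral_convolution_square_finite[OF k H[unfolded measurable_lborel2]])
  have "(\<integral>\<^sup>+x. ennreal (norm ((norm (F x))\<^sup>2)) \<partial>lebesgue)
      \<le> (\<integral>\<^sup>+x. (\<integral>\<^sup>+y. ennreal (k (x - y)) * H y \<partial>lborel)\<^sup>2 \<partial>lebesgue)"
  proof (rule nn_integral_mono)
    fix x
    have "ennreal (norm (F x)) \<le> (\<integral>\<^sup>+y. ennreal (k (x - y)) * H y \<partial>lborel)"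
      using F(2)[of x] by (simp add: conv)
    then have "(ennreal (norm (F x)))\<^sup>2 \<le> (\<integral>\<^sup>+y. ennreal (k (x - y)) * H y \<partial>lborel)\<^sup>2"
      by (rule power_mono) simp
    then show "ennreal (norm ((norm (F x))\<^sup>2)) \<le> (\<integral>\<^sup>+y. ennreal (k (x - y)) * H y \<partial>lborel)\<^sup>2"
      by (simp add: ennreal_power)
  qed
  also have "\<dots> = (\<integral>\<^sup>+x. (\<integral>\<^sup>+y. ennreal (k (x - y)) * H y \<partial>lborel)\<^sup>2 \<partial>lborel)"
    by (rule nn_integral_completion) measurable
  also have "\<dots> < \<infinity>"
    by (rule finite)
  finally have "integrable lebesgue (\<lambda>x. (norm (F x))\<^sup>2)"
    by (intro integrableI_bounded) (use F(1) in measurable)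
  then show ?thesis unfolding L2_def using F(1) by simp
qed

definition has_primitive :: "(real \<Rightarrow> complex) \<Rightarrow> (real \<Rightarrow> complex) \<Rightarrow> bool" where
  "has_primitive f F \<longleftrightarrow> (\<forall>a b. a \<le> b \<longrightarrow> (f has_integral (F b - F a)) {a..b})"

lemma has_primitiveD: "has_primitive f F \<Longrightarrow> a \<le> b \<Longrightarrow> (f has_integral (F b - F a)) {a..b}"
  by (simp add: has_primitive_def)

lemma weak_dd_iff_has_primitive:
  "weak_dd f f1 f2 \<longleftrightarrow> (\<forall>x. (f has_vector_derivative f1 x) (at x)) \<and> has_primitive f2 f1"
  by (simp add: weak_dd_def has_primitive_def)

lemma has_primitive_add:
  "has_primitive f F \<Longrightarrow> has_primitive g G \<Longrightarrow> has_primitive (\<lambda>x. f x + g x) (\<lambda>x. F x + G x)"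
proof (unfold has_primitive_def, intro allI impI)
  fix a b :: real
  assume "\<forall>a b. a \<le> b \<longrightarrow> (f has_integral F b - F a) {a..b}"
    "\<forall>a b. a \<le> b \<longrightarrow> (g has_integral G b - G a) {a..b}" "a \<le> b"
  then have "((\<lambda>x. f x + g x) has_integral (F b - F a) + (G b - G a)) {a..b}"
    by (intro has_integral_add) auto
  then show "((\<lambda>x. f x + g x) has_integral F b + G b - (F a + G a)) {a..b}"
    by (simp add: algebra_simps)
qed

lemma has_primitive_cmult: "has_primitive f F \<Longrightarrow> has_primitive (\<lambda>x. c * f x) (\<lambda>x. c * F x)"
proof (unfold has_primitive_def, intro allI impI)
  fix a b :: real
  assume "\<forall>a b. a \<le> b \<longrightarrow> (f has_integral F b - F a) {a..b}" "a \<le> b"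
  then have "((\<lambda>x. c * f x) has_integral c * (F b - F a)) {a..b}"
    by (intro has_integral_mult_right) auto
  then show "((\<lambda>x. c * f x) has_integral c * F b - c * F a) {a..b}"
    by (simp add: algebra_simps)
qed

lemma has_primitive_diff:
  "has_primitive f F \<Longrightarrow> has_primitive g G \<Longrightarrow> has_primitive (\<lambda>x. f x - g x) (\<lambda>x. F x - G x)"
  using has_primitive_add[of f F "\<lambda>x. -1 * g x" "\<lambda>x. -1 * G x"] has_primitive_cmult[of g G "-1"]
  by simp

lemma has_primitive_cong:
  "has_primitive f F \<Longrightarrow> (\<And>x. f x = g x) \<Longrightarrow> (\<And>x. F x = G x) \<Longrightarrow> has_primitive g G"
  unfolding has_primitive_def by (metis ext)

lemma has_primitive_AE_cong:
  assumes "has_primitive f F" "AE x in lebesgue. f x = g x"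
  shows "has_primitive g F"
proof -
  obtain N where N: "\<And>x. x \<in> space lebesgue - N \<Longrightarrow> f x = g x" "N \<in> null_sets lebesgue"
    using AE_E3[OF assms(2)] by blast
  then have "negligible N" by (simp add: negligible_iff_null_sets)
  show ?thesis
    unfolding has_primitive_def
  proof (intro allI impI)
    fix a b :: real
    assume "a \<le> b"
    show "(g has_integral (F b - F a)) {a..b}"
      by (rule has_integral_spike[OF \<open>negligible N\<close> _ has_primitiveD[OF assms(1) \<open>a \<le> b\<close>]])
        (use N in auto)
  qed
qed

lemma has_primitive_of_derivative:
  assumes "\<And>x. (F has_vector_derivative f x) (at x)"
  shows "has_primitive f F"
  unfolding has_primitive_def
proof (intro allI impI)
  fix a b :: real
  assume "a \<le> b"
  then show "(f has_integral (F b - F a)) {a..b}"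
    by (rule fundamental_theorem_of_calculus)
      (use assms in \<open>auto intro: has_vector_derivative_at_within\<close>)
qed

lemma has_primitive_has_vector_derivative:
  assumes F: "has_primitive f F" and f: "continuous_on UNIV f"
  shows "(F has_vector_derivative f x) (at x)"
proof -
  let ?S = "{x - 1..x + 1}"
  have "((\<lambda>u. integral {x - 1..u} f) has_vector_derivative f x) (at x within ?S)"
    by (rule integral_has_vector_derivative) (auto intro: continuous_on_subset[OF f])
  then have d: "((\<lambda>u. F (x - 1) + integral {x - 1..u} f) has_vector_derivative f x) (at x within ?S)"
    by (auto intro!: derivative_eq_intros)
  have eq: "F u = F (x - 1) + integral {x - 1..u} f" if "u \<in> ?S" for u
    using has_primitiveD[OF F, of "x - 1" u] that by (simp add: integral_unique)
  have "(F has_vector_derivative f x) (at x within ?S)"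
    by (rule has_vector_derivative_transform[OF _ eq d]) simp_all
  moreover have "at x within ?S = at x"
    by (rule at_within_interior) simp
  ultimately show ?thesis by simp
qed

lemma has_primitive_continuous:
  assumes F: "has_primitive f F" and f: "\<And>a b. f integrable_on {a..b}"
  shows "continuous_on UNIV F"
proof -
  have "isCont F x" for x
  proof -
    let ?S = "{x - 1..x + 1}"
    have "continuous_on ?S (\<lambda>u. F (x - 1) + integral {x - 1..u} f)"
      by (intro continuous_intros indefinite_integral_continuous_1 f)
    moreover have "F (x - 1) + integral {x - 1..u} f = F u" if "u \<in> ?S" for u
      using has_primitiveD[OF F, of "x - 1" u] that by (simp add: integral_unique)
    ultimately have "continuous_on ?S F" by (rule continuous_on_eq)
    then show ?thesis
      by (rule continuous_on_interior) simp
  qed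
  then show ?thesis by (simp add: continuous_on_eq_continuous_at)
qed

lemma continuous_on_has_vector_derivative:
  "(\<And>x. (r has_vector_derivative r' x) (at x)) \<Longrightarrow> continuous_on UNIV r"
  using has_vector_derivative_continuous continuous_at_imp_continuous_on by blast

lemma has_integral_set_lebesgue_complex:
  fixes f :: "real \<Rightarrow> complex"
  assumes "set_integrable lebesgue S f"
  shows "(f has_integral (\<integral>y. indicator S y * f y \<partial>lebesgue)) S"
  using has_integral_set_lebesgue[OF assms] by (simp add: set_lebesgue_integral_complex)

lemma set_integrable_continuous:
  fixes f :: "real \<Rightarrow> complex"
  shows "continuous_on UNIV f \<Longrightarrow> set_integrable lebesgue {a..b} f"
  by (rule absolutely_integrable_continuous_real[OF continuous_on_subset]) auto

lemma continuous_on_bounded_Icc: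
  fixes r :: "real \<Rightarrow> complex"
  assumes "continuous_on UNIV r"
  obtains B where "B > 0" "\<And>x. x \<in> {a..b} \<Longrightarrow> norm (r x) \<le> B"
proof -
  have "compact (r ` {a..b})"
    by (rule compact_continuous_image[OF continuous_on_subset[OF assms]]) auto
  then show ?thesis
    using that by (auto dest!: compact_imp_bounded simp: bounded_pos)
qed

lemma set_integrable_continuous_mult:
  fixes r f :: "real \<Rightarrow> complex"
  assumes r: "continuous_on UNIV r" and f: "set_integrable lebesgue {a..b} f"
    "f \<in> borel_measurable lebesgue"
  shows "set_integrable lebesgue {a..b} (\<lambda>x. r x * f x)"
proof -
  obtain B where B: "B > 0" "\<And>x. x \<in> {a..b} \<Longrightarrow> norm (r x) \<le> B"
    using continuous_on_bounded_Icc[OF r, of a b] by blast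
  have [measurable]: "r \<in> borel_measurable lebesgue" "f \<in> borel_measurable lebesgue"
    "(\<lambda>x::real. x) \<in> borel_measurable lebesgue"
    using borel_measurable_continuous_lebesgue[OF r] f(2) borel_measurable_ident_lebesgue by auto
  have "integrable lebesgue (\<lambda>x. indicator {a..b} x * (r x * f x))"
  proof (rule Bochner_Integration.integrable_bound)
    show "integrable lebesgue (\<lambda>x. B * norm (indicator {a..b} x * f x))"
      using f(1) by (simp add: set_integrable_complex_iff)
    show "AE x in lebesgue. norm (indicator {a..b} x * (r x * f x))
        \<le> norm (B * norm (indicator {a..b} x * f x))"
      using B by (auto simp: indicator_def norm_mult intro!: mult_right_mono)
  qed measurable
  then show ?thesis by (simp add: set_integrable_complex_iff)
qed

lemma sigma_finite_lebesgue: "sigma_finite_measure (lebesgue :: real measure)"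
proof -
  from sigma_finite_lborel obtain A :: "real set set" where A: "countable A" "A \<subseteq> sets lborel"
      "\<Union>A = space lborel" "\<forall>a\<in>A. emeasure lborel a \<noteq> \<infinity>"
    unfolding sigma_finite_measure_def by blast
  then show ?thesis
    unfolding sigma_finite_measure_def by (intro exI[of _ A]) auto
qed

interpretation lebesgue_pair: pair_sigma_finite "lebesgue :: real measure" "lebesgue :: real measure"
  by (simp add: pair_sigma_finite_def sigma_finite_lebesgue)

lemma borel_measurable_lebesgue_pair_components:
  fixes f :: "real \<Rightarrow> 'a::topological_space"
  assumes "f \<in> borel_measurable lebesgue"
  shows "(\<lambda>z. f (fst z)) \<in> borel_measurable (lebesgue \<Otimes>\<^sub>M lebesgue)"
    "(\<lambda>z. f (snd z)) \<in> borel_measurable (lebesgue \<Otimes>\<^sub>M lebesgue)"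
  by (auto intro!: measurable_compose[OF measurable_fst] measurable_compose[OF measurable_snd] assms)

lemma borel_measurable_triangle:
  fixes f g :: "real \<Rightarrow> complex"
  assumes [measurable]: "f \<in> borel_measurable lebesgue" "g \<in> borel_measurable lebesgue"
  shows "(\<lambda>(x, y). indicator {a..b} x * indicator {a..x} y * (g x * f y))
    \<in> borel_measurable (lebesgue \<Otimes>\<^sub>M lebesgue)"
proof -
  note [measurable] = borel_measurable_lebesgue_pair_components[OF borel_measurable_ident_lebesgue]
    borel_measurable_lebesgue_pair_components[OF assms(1)]
    borel_measurable_lebesgue_pair_components[OF assms(2)]
  have "(\<lambda>(x, y). indicator {a..b} x * indicator {a..x} y * (g x * f y)) =
      (\<lambda>z. (if a \<le> fst z \<and> fst z \<le> b then 1 else 0) *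
        (if a \<le> snd z \<and> snd z \<le> fst z then 1 else 0) * (g (fst z) * f (snd z)))"
    by (auto simp: fun_eq_iff indicator_def)
  then show ?thesis
    by (simp only:) measurable
qed

lemma integrable_triangle:
  fixes f g :: "real \<Rightarrow> complex"
  assumes f: "set_integrable lebesgue {a..b} f" "f \<in> borel_measurable lebesgue"
    and g: "continuous_on UNIV g"
  shows "integrable (lebesgue \<Otimes>\<^sub>M lebesgue)
    (\<lambda>(x, y). indicator {a..b} x * indicator {a..x} y * (g x * f y))"
    (is "integrable _ ?G")
proof (rule integrableI_bounded)
  note [measurable] = f(2) borel_measurable_ident_lebesgue
    borel_measurable_lebesgue_pair_components[OF borel_measurable_ident_lebesgue]
    borel_measurable_lebesgue_pair_components[OF f(2)]
  show "?G \<in> borel_measurable (lebesgue \<Otimes>\<^sub>M lebesgue)"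
    by (rule borel_measurable_triangle[OF f(2) borel_measurable_continuous_lebesgue[OF g]])
  obtain B where B: "B > 0" "\<And>x. x \<in> {a..b} \<Longrightarrow> norm (g x) \<le> B"
    using continuous_on_bounded_Icc[OF g, of a b] by blast
  have "(\<integral>\<^sup>+z. ennreal (norm (?G z)) \<partial>(lebesgue \<Otimes>\<^sub>M lebesgue)) \<le>
      (\<integral>\<^sup>+z. ennreal (B * indicator {a..b} (fst z)) *
        ennreal (indicator {a..b} (snd z) * norm (f (snd z))) \<partial>(lebesgue \<Otimes>\<^sub>M lebesgue))"
  proof (rule nn_integral_mono)
    fix z :: "real \<times> real"
    obtain x y where z: "z = (x, y)" by (cases z)
    have "norm (?G (x, y)) \<le> (B * indicator {a..b} x) * (indicator {a..b} y * norm (f y))"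
      using B by (auto simp: norm_mult indicator_def intro!: mult_right_mono)
    then show "ennreal (norm (?G z)) \<le> ennreal (B * indicator {a..b} (fst z)) *
        ennreal (indicator {a..b} (snd z) * norm (f (snd z)))"
      using B(1) by (simp add: z ennreal_mult[symmetric])
  qed
  also have "\<dots> = (\<integral>\<^sup>+x. ennreal (B * indicator {a..b} x) \<partial>lebesgue) *
      (\<integral>\<^sup>+y. ennreal (indicator {a..b} y * norm (f y)) \<partial>lebesgue)"
    by (subst sigma_finite_measure.nn_integral_fst[OF sigma_finite_lebesgue, symmetric])
      (measurable, simp add: nn_integral_cmult nn_integral_multc)
  also have "\<dots> < \<infinity>"
  proof -
    have "(\<integral>\<^sup>+x. ennreal (B * indicator {a..b} x) \<partial>lebesgue) =
        (\<integral>\<^sup>+x. ennreal B * indicator {a..b} x \<partial>lebesgue)"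
      using B(1) by (intro nn_integral_cong) (auto simp: indicator_def)
    also have "\<dots> = ennreal B * emeasure lebesgue {a..b}"
      by (rule nn_integral_cmult_indicator) simp
    finally have "(\<integral>\<^sup>+x. ennreal (B * indicator {a..b} x) \<partial>lebesgue) = ennreal B * emeasure lebesgue {a..b}" .
    moreover have "(\<integral>\<^sup>+y. ennreal (indicator {a..b} y * norm (f y)) \<partial>lebesgue) < \<infinity>"
      using f(1) by (simp add: set_integrable_def integrable_iff_bounded abs_mult)
    ultimately show ?thesis by (simp add: ennreal_mult_less_top emeasure_lborel_Icc_eq)
  qed
  finally show "(\<integral>\<^sup>+z. ennreal (norm (?G z)) \<partial>(lebesgue \<Otimes>\<^sub>M lebesgue)) < \<infinity>" .
qed

lemma triangle_Fubini:
  fixes f g :: "real \<Rightarrow> complex"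
  assumes f: "set_integrable lebesgue {a..b} f" "f \<in> borel_measurable lebesgue"
    and g: "continuous_on UNIV g"
  shows "integrable lebesgue
      (\<lambda>x. indicator {a..b} x * (g x * (\<integral>y. indicator {a..x} y * f y \<partial>lebesgue)))"
    and "(\<integral>x. indicator {a..b} x * (g x * (\<integral>y. indicator {a..x} y * f y \<partial>lebesgue)) \<partial>lebesgue) =
      (\<integral>y. indicator {a..b} y * (f y * (\<integral>x. indicator {y..b} x * g x \<partial>lebesgue)) \<partial>lebesgue)"
proof -
  define G where "G x y = indicator {a..b} x * indicator {a..x} y * (g x * f y)" for x y
  have G: "integrable (lebesgue \<Otimes>\<^sub>M lebesgue) (case_prod G)"
    unfolding G_def using integrable_triangle[OF f g] by (simp add: case_prod_beta')
  have inner_y: "(\<integral>y. G x y \<partial>lebesgue) =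
      indicator {a..b} x * (g x * (\<integral>y. indicator {a..x} y * f y \<partial>lebesgue))" for x
  proof -
    have "(\<integral>y. G x y \<partial>lebesgue) =
        (\<integral>y. (indicator {a..b} x * g x) * (indicator {a..x} y * f y) \<partial>lebesgue)"
      by (rule Bochner_Integration.integral_cong) (simp_all add: G_def mult_ac)
    also have "\<dots> = (indicator {a..b} x * g x) * (\<integral>y. indicator {a..x} y * f y \<partial>lebesgue)"
      by (rule integral_mult_right_zero)
    finally show ?thesis by (simp only: mult.assoc)
  qed
  have inner_x: "(\<integral>x. G x y \<partial>lebesgue) =
      indicator {a..b} y * (f y * (\<integral>x. indicator {y..b} x * g x \<partial>lebesgue))" for y
  proof -
    have "(\<integral>x. G x y \<partial>lebesgue) =
        (\<integral>x. (indicator {a..b} y * f y) * (indicator {y..b} x * g x) \<partial>lebesgue)"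
      by (rule Bochner_Integration.integral_cong) (auto simp: G_def indicator_def)
    also have "\<dots> = (indicator {a..b} y * f y) * (\<integral>x. indicator {y..b} x * g x \<partial>lebesgue)"
      by (rule integral_mult_right_zero)
    finally show ?thesis by (simp only: mult.assoc)
  qed
  show "integrable lebesgue
      (\<lambda>x. indicator {a..b} x * (g x * (\<integral>y. indicator {a..x} y * f y \<partial>lebesgue)))"
    using lebesgue_pair.integrable_fst'[OF G] by (simp add: inner_y)
  show "(\<integral>x. indicator {a..b} x * (g x * (\<integral>y. indicator {a..x} y * f y \<partial>lebesgue)) \<partial>lebesgue) =
      (\<integral>y. indicator {a..b} y * (f y * (\<integral>x. indicator {y..b} x * g x \<partial>lebesgue)) \<partial>lebesgue)"
    using lebesgue_pair.Fubini_integral[OF G] by (simp add: inner_x inner_y)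
qed

lemma has_integral_by_parts_indefinite_integral:
  fixes f r r' :: "real \<Rightarrow> complex"
  assumes f: "set_integrable lebesgue {a..b} f" "f \<in> borel_measurable lebesgue"
    and r: "\<And>x. (r has_vector_derivative r' x) (at x)" "continuous_on UNIV r'"
  defines "I x \<equiv> \<integral>y. indicator {a..x} y * f y \<partial>lebesgue"
  shows "((\<lambda>x. r' x * I x + r x * f x) has_integral r b * I b) {a..b}"
proof -
  have r'_int: "(\<integral>x. indicator {y..b} x * r' x \<partial>lebesgue) = r b - r y" if "y \<le> b" for y
    using has_integral_unique[OF has_primitiveD[OF has_primitive_of_derivative[OF r(1)] that]
        has_integral_set_lebesgue_complex[OF set_integrable_continuous[OF r(2)]]]
    by simp
  have rf: "set_integrable lebesgue {a..b} (\<lambda>x. r x * f x)"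
    by (rule set_integrable_continuous_mult[OF continuous_on_has_vector_derivative[OF r(1)] f])
  note swap = triangle_Fubini[OF f r(2), folded I_def]
  have "(\<integral>x. indicator {a..b} x * (r' x * I x) \<partial>lebesgue)
      = (\<integral>y. r b * (indicator {a..b} y * f y) - indicator {a..b} y * (r y * f y) \<partial>lebesgue)"
    unfolding swap(2)
  proof (intro Bochner_Integration.integral_cong refl)
    fix y
    show "indicator {a..b} y * (f y * (\<integral>x. indicator {y..b} x * r' x \<partial>lebesgue)) =
        r b * (indicator {a..b} y * f y) - indicator {a..b} y * (r y * f y)"
    proof (cases "y \<in> {a..b}")
      case True
      then have R: "(\<integral>x. indicator {y..b} x * r' x \<partial>lebesgue) = r b - r y"
        by (intro r'_int) simp
      show ?thesis
        using True unfolding R by (simp add: algebra_simps)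
    qed simp
  qed
  also have "\<dots> = r b * I b - (\<integral>y. indicator {a..b} y * (r y * f y) \<partial>lebesgue)"
    using f(1) rf by (simp add: I_def set_integrable_complex_iff)
  finally have sum: "(\<integral>x. indicator {a..b} x * (r' x * I x) \<partial>lebesgue) +
      (\<integral>x. indicator {a..b} x * (r x * f x) \<partial>lebesgue) = r b * I b"
    by simp
  have "((\<lambda>x. r' x * I x) has_integral (\<integral>x. indicator {a..b} x * (r' x * I x) \<partial>lebesgue)) {a..b}"
    by (rule has_integral_set_lebesgue_complex) (simp add: set_integrable_complex_iff swap(1))
  from has_integral_add[OF this has_integral_set_lebesgue_complex[OF rf]] show ?thesis
    unfolding sum .
qed

text \<open>Integration by parts for a primitive of a merely locally integrable \<open>f\<close>; the
  classical rule does not apply because \<open>F\<close> need not be differentiable.\<close>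
lemma has_primitive_mult:
  fixes f F r r' :: "real \<Rightarrow> complex"
  assumes F: "has_primitive f F"
    and f: "\<And>a b. set_integrable lebesgue {a..b} f" "f \<in> borel_measurable lebesgue"
    and r: "\<And>x. (r has_vector_derivative r' x) (at x)" "continuous_on UNIV r'"
  shows "has_primitive (\<lambda>x. r' x * F x + r x * f x) (\<lambda>x. r x * F x)"
  unfolding has_primitive_def
proof (intro allI impI)
  fix a b :: real
  assume ab: "a \<le> b"
  define I where "I x = (\<integral>y. indicator {a..x} y * f y \<partial>lebesgue)" for x
  have F_eq: "F x = F a + I x" if "x \<in> {a..b}" for x
    using has_integral_unique[OF has_primitiveD[OF F, of a x]
        has_integral_set_lebesgue_complex[OF f(1)[of a x]]] that
    by (simp add: I_def algebra_simps)
  have "((\<lambda>x. F a * r' x + (r' x * I x + r x * f x)) has_integral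
      F a * (r b - r a) + r b * I b) {a..b}"
    unfolding I_def
    by (intro has_integral_add has_integral_mult_right
        has_primitiveD[OF has_primitive_of_derivative[OF r(1)] ab]
        has_integral_by_parts_indefinite_integral f r)
  then have "((\<lambda>x. r' x * F x + r x * f x) has_integral F a * (r b - r a) + r b * I b) {a..b}"
  proof (rule has_integral_eq[rotated])
    fix x
    assume "x \<in> {a..b}"
    then show "F a * r' x + (r' x * I x + r x * f x) = r' x * F x + r x * f x"
      using F_eq[of x] by (simp add: algebra_simps)
  qed
  moreover have "F a * (r b - r a) + r b * I b = r b * F b - r a * F a"
    using F_eq[of b] ab by (simp add: algebra_simps)
  ultimately show "((\<lambda>x. r' x * F x + r x * f x) has_integral r b * F b - r a * F a) {a..b}"
    by simp
qed

lemma norm_integral_le_nn_integral: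
  fixes g :: "real \<Rightarrow> complex"
  assumes "integrable lebesgue g" "\<And>y. norm (g y) \<le> B y"
  shows "ennreal (norm (\<integral>y. g y \<partial>lebesgue)) \<le> (\<integral>\<^sup>+y. ennreal (B y) \<partial>lebesgue)"
proof -
  have "ennreal (norm (\<integral>y. g y \<partial>lebesgue)) \<le> (\<integral>\<^sup>+y. norm (g y) \<partial>lebesgue)"
    by (rule integral_norm_bound_ennreal[OF assms(1)])
  also have "\<dots> \<le> (\<integral>\<^sup>+y. ennreal (B y) \<partial>lebesgue)"
    by (intro nn_integral_mono ennreal_leI assms(2))
  finally show ?thesis .
qed

lemma AE_lebesgue_neq: "AE y in lebesgue. y \<noteq> (c::real)"
  by (rule AE_completion[OF AE_lborel_singleton])

lemma integrable_indicator_mult: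
  fixes f :: "real \<Rightarrow> complex"
  assumes "integrable lebesgue f" "A \<in> sets lebesgue"
  shows "integrable lebesgue (\<lambda>y. indicator A y * f y)"
proof (rule Bochner_Integration.integrable_bound[OF integrable_norm[OF assms(1)]])
  show "(\<lambda>y. indicator A y * f y) \<in> borel_measurable lebesgue"
    using assms by (intro borel_measurable_times borel_measurable_indicator borel_measurable_integrable)
  show "AE x in lebesgue. norm (indicator A x * f x) \<le> norm (norm (f x))"
    by (auto simp: indicator_def)
qed

lemma has_primitive_lower_halfline_integral:
  fixes g :: "real \<Rightarrow> complex"
  assumes g: "\<And>x. integrable lebesgue (\<lambda>y. indicator {..x} y * g y)"
    "\<And>a b. set_integrable lebesgue {a..b} g"
  shows "has_primitive g (\<lambda>x. \<integral>y. indicator {..x} y * g y \<partial>lebesgue)"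
  unfolding has_primitive_def
proof (intro allI impI)
  fix a b :: real
  assume ab: "a \<le> b"
  have "(\<integral>y. indicator {..b} y * g y \<partial>lebesgue) - (\<integral>y. indicator {..a} y * g y \<partial>lebesgue)
      = (\<integral>y. indicator {..b} y * g y - indicator {..a} y * g y \<partial>lebesgue)"
    using g(1) by simp
  also have "\<dots> = (\<integral>y. indicator {a..b} y * g y \<partial>lebesgue)"
  proof (rule integral_cong_AE)
    show "(\<lambda>y. indicator {..b} y * g y - indicator {..a} y * g y) \<in> borel_measurable lebesgue"
      using g(1)[of a] g(1)[of b] by (intro borel_measurable_integrable) simp
    show "(\<lambda>y. indicator {a..b} y * g y) \<in> borel_measurable lebesgue"
      using g(2)[of a b] by (intro borel_measurable_integrable) (simp add: set_integrable_complex_iff)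
  qed (use AE_lebesgue_neq[of a] ab in \<open>auto simp: indicator_def elim!: eventually_mono\<close>)
  finally show "(g has_integral (\<integral>y. indicator {..b} y * g y \<partial>lebesgue) -
      (\<integral>y. indicator {..a} y * g y \<partial>lebesgue)) {a..b}"
    using has_integral_set_lebesgue_complex[OF g(2)[of a b]] by simp
qed

lemma has_primitive_upper_halfline_integral:
  fixes g :: "real \<Rightarrow> complex"
  assumes g: "\<And>x. integrable lebesgue (\<lambda>y. indicator {x..} y * g y)"
    "\<And>a b. set_integrable lebesgue {a..b} g"
  shows "has_primitive g (\<lambda>x. - (\<integral>y. indicator {x..} y * g y \<partial>lebesgue))"
  unfolding has_primitive_def
proof (intro allI impI)
  fix a b :: real
  assume ab: "a \<le> b"
  have "- (\<integral>y. indicator {b..} y * g y \<partial>lebesgue) - - (\<integral>y. indicator {a..} y * g y \<partial>lebesgue)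
      = (\<integral>y. indicator {a..} y * g y - indicator {b..} y * g y \<partial>lebesgue)"
    using g(1) by simp
  also have "\<dots> = (\<integral>y. indicator {a..b} y * g y \<partial>lebesgue)"
  proof (rule integral_cong_AE)
    show "(\<lambda>y. indicator {a..} y * g y - indicator {b..} y * g y) \<in> borel_measurable lebesgue"
      using g(1)[of a] g(1)[of b] by (intro borel_measurable_integrable) simp
    show "(\<lambda>y. indicator {a..b} y * g y) \<in> borel_measurable lebesgue"
      using g(2)[of a b] by (intro borel_measurable_integrable) (simp add: set_integrable_complex_iff)
  qed (use AE_lebesgue_neq[of b] ab in \<open>auto simp: indicator_def elim!: eventually_mono\<close>)
  finally show "(g has_integral - (\<integral>y. indicator {b..} y * g y \<partial>lebesgue) -
      - (\<integral>y. indicator {a..} y * g y \<partial>lebesgue)) {a..b}"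
    using has_integral_set_lebesgue_complex[OF g(2)[of a b]] by simp
qed

definition antideriv :: "(real \<Rightarrow> complex) \<Rightarrow> real \<Rightarrow> complex" where
  "antideriv g x = (if 0 \<le> x then integral {0..x} g else - integral {x..0} g)"

lemma has_primitive_antideriv:
  fixes g :: "real \<Rightarrow> complex"
  assumes g: "continuous_on UNIV g"
  shows "has_primitive g (antideriv g)"
  unfolding has_primitive_def
proof (intro allI impI)
  fix a b :: real
  assume ab: "a \<le> b"
  have gi: "g integrable_on {c..d}" for c d
    by (rule integrable_continuous_real[OF continuous_on_subset[OF g]]) auto
  have "antideriv g b - antideriv g a = integral {a..b} g"
    using ab gi Henstock_Kurzweil_Integration.integral_combine[of a 0 b g]
      Henstock_Kurzweil_Integration.integral_combine[of 0 a b g]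
      Henstock_Kurzweil_Integration.integral_combine[of a b 0 g]
    by (auto simp: antideriv_def algebra_simps)
  then show "(g has_integral antideriv g b - antideriv g a) {a..b}"
    using gi[of a b] by (simp add: has_integral_integral)
qed

lemma has_vector_derivative_antideriv:
  "continuous_on UNIV g \<Longrightarrow> (antideriv g has_vector_derivative g x) (at x)"
  by (rule has_primitive_has_vector_derivative[OF has_primitive_antideriv])

lemma norm_antideriv_le:
  fixes g :: "real \<Rightarrow> complex"
  assumes g: "continuous_on UNIV g"
  shows "norm (antideriv g x) \<le>
    (\<integral>\<^sup>+y. ennreal ((indicator {0..x} y + indicator {x..0} y) * norm (g y)) \<partial>lebesgue)"
proof -
  have I: "integral {c..d} g = (\<integral>y. indicator {c..d} y * g y \<partial>lebesgue)" for c d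
    using has_integral_set_lebesgue_complex[OF set_integrable_continuous[OF g]]
    by (simp add: integral_unique)
  have "ennreal (norm (\<integral>y. indicator {c..d} y * g y \<partial>lebesgue)) \<le>
      (\<integral>\<^sup>+y. ennreal ((indicator {0..x} y + indicator {x..0} y) * norm (g y)) \<partial>lebesgue)"
    if "{c..d} = {0..x} \<or> {c..d} = {x..0}" for c d
  proof (rule norm_integral_le_nn_integral)
    show "integrable lebesgue (\<lambda>y. indicator {c..d} y * g y)"
      using set_integrable_continuous[OF g] by (simp add: set_integrable_complex_iff)
    show "norm (indicator {c..d} y * g y) \<le> (indicator {0..x} y + indicator {x..0} y) * norm (g y)"
      for y
      using that by (auto simp: indicator_def norm_mult)
  qed
  then show ?thesis unfolding antideriv_def I by auto
qed

section \<open>Reduction of order\<close>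

lemma has_vector_derivative_inverse:
  fixes u :: "real \<Rightarrow> complex"
  assumes "u x \<noteq> 0" "(u has_vector_derivative d) (at x)"
  shows "((\<lambda>x. 1 / u x) has_vector_derivative - d / (u x)\<^sup>2) (at x)"
proof -
  have "((inverse \<circ> u) has_vector_derivative d * - (inverse (u x) ^ Suc (Suc 0))) (at x)"
    by (rule field_vector_diff_chain_at[OF assms(2) DERIV_inverse[OF assms(1)]])
  moreover have "d * - (inverse (u x) ^ Suc (Suc 0)) = - d / (u x)\<^sup>2"
    by (simp add: field_simps power2_eq_square)
  moreover have "inverse \<circ> u = (\<lambda>x. 1 / u x)"
    by (simp add: fun_eq_iff inverse_eq_divide)
  ultimately show ?thesis by simp
qed

text \<open>If \<open>u\<close> is a nowhere vanishing solution of \<open>u'' = q u\<close>, then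
  \<open>w = u Q\<close> with \<open>Q' = P / u\<^sup>2\<close> and \<open>P' = u h\<close> solves \<open>w'' = q w + h\<close>.\<close>
lemma weak_dd_reduction_of_order:
  fixes u u1 q h P Q :: "real \<Rightarrow> complex"
  assumes u: "\<And>x. (u has_vector_derivative u1 x) (at x)"
    and u1: "\<And>x. (u1 has_vector_derivative q x * u x) (at x)" and q: "continuous_on UNIV q"
    and u_nonzero: "\<And>x. u x \<noteq> 0"
    and h: "\<And>a b. set_integrable lebesgue {a..b} h" "h \<in> borel_measurable lebesgue"
    and P: "has_primitive (\<lambda>x. u x * h x) P"
    and Q: "\<And>x. (Q has_vector_derivative P x / (u x)\<^sup>2) (at x)"
  shows "weak_dd (\<lambda>x. u x * Q x) (\<lambda>x. u1 x * Q x + P x / u x) (\<lambda>x. q x * (u x * Q x) + h x)"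
  unfolding weak_dd_iff_has_primitive
proof
  have u_cont: "continuous_on UNIV u" and u1_cont: "continuous_on UNIV u1"
    by (rule continuous_on_has_vector_derivative, fact u u1)+
  show "\<forall>x. ((\<lambda>x. u x * Q x) has_vector_derivative u1 x * Q x + P x / u x) (at x)"
  proof
    fix x
    have "((\<lambda>x. u x * Q x) has_vector_derivative u x * (P x / (u x)\<^sup>2) + u1 x * Q x) (at x)"
      by (rule has_vector_derivative_mult[OF u Q])
    moreover have "u x * (P x / (u x)\<^sup>2) + u1 x * Q x = u1 x * Q x + P x / u x"
      using u_nonzero[of x] by (simp add: field_simps power2_eq_square)
    ultimately show "((\<lambda>x. u x * Q x) has_vector_derivative u1 x * Q x + P x / u x) (at x)"
      by (simp add: add.commute)
  qed
  have "has_primitive (\<lambda>x. u1 x * (P x / (u x)\<^sup>2) + q x * u x * Q x) (\<lambda>x. u1 x * Q x)"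
    by (rule has_primitive_of_derivative) (rule has_vector_derivative_mult[OF u1 Q])
  moreover have "has_primitive (\<lambda>x. - u1 x / (u x)\<^sup>2 * P x + 1 / u x * (u x * h x)) (\<lambda>x. 1 / u x * P x)"
  proof (rule has_primitive_mult[OF P])
    show "set_integrable lebesgue {a..b} (\<lambda>x. u x * h x)" for a b
      by (rule set_integrable_continuous_mult[OF u_cont h(1) h(2)])
    show "(\<lambda>x. u x * h x) \<in> borel_measurable lebesgue"
      using borel_measurable_continuous_lebesgue[OF u_cont] h(2) by measurable
    show "((\<lambda>x. 1 / u x) has_vector_derivative - u1 x / (u x)\<^sup>2) (at x)" for x
      by (rule has_vector_derivative_inverse[OF u_nonzero u])
    show "continuous_on UNIV (\<lambda>x. - u1 x / (u x)\<^sup>2)"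
      by (intro continuous_intros u1_cont u_cont) (use u_nonzero in auto)
  qed
  ultimately show "has_primitive (\<lambda>x. q x * (u x * Q x) + h x) (\<lambda>x. u1 x * Q x + P x / u x)"
    by (rule has_primitive_cong[OF has_primitive_add])
      (use u_nonzero in \<open>simp_all add: field_simps power2_eq_square\<close>)
qed

lemma L2_solution_by_reduction_of_order:
  fixes u u1 q h P Q :: "real \<Rightarrow> complex" and k :: "real \<Rightarrow> real"
  assumes u: "\<And>x. (u has_vector_derivative u1 x) (at x)"
    and u1: "\<And>x. (u1 has_vector_derivative q x * u x) (at x)" and q: "continuous_on UNIV q"
    and u_nonzero: "\<And>x. u x \<noteq> 0"
    and bounded: "\<And>x. norm (u1 x / u x) \<le> B" "\<And>x. norm (q x) \<le> B"
    and k: "integrable lborel k" "\<And>t. 0 \<le> k t"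
    and h: "L2 h"
    and P: "has_primitive (\<lambda>x. u x * h x) P"
      "\<And>x. ennreal (norm (P x / u x)) \<le> nn_convolution k h x"
    and Q: "\<And>x. (Q has_vector_derivative P x / (u x)\<^sup>2) (at x)"
      "\<And>x. ennreal (norm (u x * Q x)) \<le> nn_convolution k (\<lambda>y. P y / u y) x"
  shows "\<exists>w w1 w2. L2 w \<and> L2 w1 \<and> L2 w2 \<and> weak_dd w w1 w2 \<and> (\<forall>x. w2 x = q x * w x + h x)"
proof (intro exI conjI allI)
  have u_cont: "continuous_on UNIV u" and u1_cont: "continuous_on UNIV u1"
    and Q_cont: "continuous_on UNIV Q"
    by (rule continuous_on_has_vector_derivative, fact u u1 Q(1))+
  have h_meas: "h \<in> borel_measurable lebesgue"
    by (rule L2_borel_measurable[OF h])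
  have uh: "set_integrable lebesgue {a..b} (\<lambda>x. u x * h x)" for a b
    by (rule set_integrable_continuous_mult[OF u_cont set_integrable_L2[OF h] h_meas])
  have "continuous_on UNIV P"
    by (rule has_primitive_continuous[OF P(1)])
      (use uh in \<open>simp add: set_lebesgue_integral_eq_integral(1)\<close>)
  then have P_cont: "continuous_on UNIV (\<lambda>x. P x / u x)"
    by (intro continuous_intros u_cont) (use u_nonzero in auto)
  have P_L2: "L2 (\<lambda>x. P x / u x)"
    by (rule L2_nn_convolution_bound[OF h k borel_measurable_continuous_lebesgue[OF P_cont] P(2)])
  show w_L2: "L2 (\<lambda>x. u x * Q x)"
    by (rule L2_nn_convolution_bound[OF P_L2 k borel_measurable_continuous_lebesgue Q(2)])
      (intro continuous_intros u_cont Q_cont)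
  have "L2 (\<lambda>x. u1 x / u x * (u x * Q x))"
    by (rule L2_mult_bounded[OF w_L2 borel_measurable_continuous_lebesgue bounded(1)])
      (intro continuous_intros u1_cont u_cont, use u_nonzero in auto)
  then show "L2 (\<lambda>x. u1 x * Q x + P x / u x)"
    using L2_add[OF _ P_L2] u_nonzero by simp
  show "L2 (\<lambda>x. q x * (u x * Q x) + h x)"
    by (intro L2_add L2_mult_bounded[OF w_L2 borel_measurable_continuous_lebesgue[OF q] bounded(2)] h)
  show "weak_dd (\<lambda>x. u x * Q x) (\<lambda>x. u1 x * Q x + P x / u x) (\<lambda>x. q x * (u x * Q x) + h x)"
    by (rule weak_dd_reduction_of_order[OF u u1 q u_nonzero set_integrable_L2[OF h] h_meas P(1) Q(1)])
qed simp

section \<open>The plus mode\<close>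

lemma kappa_weighted_integral_bound:
  fixes h :: "real \<Rightarrow> complex"
  assumes S: "integrable lebesgue (\<lambda>y. indicator S y * (ckappa y * h y))"
    and between: "\<And>y. y \<in> S \<Longrightarrow> \<bar>x\<bar> + \<bar>x - y\<bar> \<le> \<bar>y\<bar>"
  shows "ennreal (norm ((\<integral>y. indicator S y * (ckappa y * h y) \<partial>lebesgue) / ckappa x))
    \<le> nn_convolution (\<lambda>t. 4 * kappa t) h x"
  unfolding nn_convolution_def integral_divide_zero[symmetric]
proof (rule norm_integral_le_nn_integral)
  show "integrable lebesgue (\<lambda>y. indicator S y * (ckappa y * h y) / ckappa x)"
    using S by simp
  show "norm (indicator S y * (ckappa y * h y) / ckappa x) \<le> 4 * kappa (x - y) * norm (h y)" for y
  proof (cases "y \<in> S")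
    case True
    have "kappa y / kappa x \<le> 4 * kappa (x - y)"
      using kappa_quotient_le[OF between[OF True]] kappa_nonneg[of "x - y"] by linarith
    then have "kappa y / kappa x * norm (h y) \<le> 4 * kappa (x - y) * norm (h y)"
      by (rule mult_right_mono) simp
    then show ?thesis
      using True by (simp add: ckappa_def norm_mult norm_divide)
  qed simp
qed

lemma kappa_weight_between_le:
  assumes "y \<in> {0..x} \<or> y \<in> {x..0}"
  shows "kappa x * ((indicator {0..x} y + indicator {x..0} y) * norm (g y / ckappa y))
    \<le> 4 * kappa (x - y) * norm (g y)"
proof -
  have "kappa x / kappa y \<le> 2 * kappa (y - x)"
    by (rule kappa_quotient_le) (use assms in auto)
  then have quotient: "kappa x / kappa y \<le> 2 * kappa (x - y)"
    using kappa_minus[of "x - y"] by simp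
  have two: "indicator {0..x} y + indicator {x..0} y \<le> (2::real)"
    by (auto simp: indicator_def)
  have "kappa x * ((indicator {0..x} y + indicator {x..0} y) * norm (g y / ckappa y))
      = (indicator {0..x} y + indicator {x..0} y) * (kappa x / kappa y * norm (g y))"
    using kappa_pos[of y] by (simp add: ckappa_def norm_divide mult_ac)
  also have "\<dots> \<le> 2 * (2 * kappa (x - y) * norm (g y))"
    by (intro mult_mono two mult_right_mono quotient) auto
  finally show ?thesis by simp
qed

lemma kappa_antideriv_bound:
  fixes g :: "real \<Rightarrow> complex"
  assumes g: "continuous_on UNIV g"
  shows "ennreal (norm (ckappa x * antideriv (\<lambda>y. g y / ckappa y) x))
    \<le> nn_convolution (\<lambda>t. 4 * kappa t) g x"
proof -
  have gk: "continuous_on UNIV (\<lambda>y. g y / ckappa y)"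
    by (intro continuous_intros g continuous_on_ckappa) (simp add: ckappa_nonzero)
  note [measurable] = borel_measurable_continuous_lebesgue[OF gk] borel_measurable_ident_lebesgue
  have "ennreal (norm (ckappa x * antideriv (\<lambda>y. g y / ckappa y) x)) =
      ennreal (kappa x) * ennreal (norm (antideriv (\<lambda>y. g y / ckappa y) x))"
    by (simp add: ckappa_def norm_mult ennreal_mult)
  also have "\<dots> \<le> ennreal (kappa x) * (\<integral>\<^sup>+y. ennreal ((indicator {0..x} y + indicator {x..0} y) *
      norm (g y / ckappa y)) \<partial>lebesgue)"
    by (intro mult_left_mono norm_antideriv_le gk) simp
  also have "\<dots> = (\<integral>\<^sup>+y. ennreal (kappa x) * ennreal ((indicator {0..x} y + indicator {x..0} y) *
      norm (g y / ckappa y)) \<partial>lebesgue)"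
    by (rule nn_integral_cmult[symmetric]) measurable
  also have "\<dots> \<le> nn_convolution (\<lambda>t. 4 * kappa t) g x"
    unfolding nn_convolution_def
  proof (rule nn_integral_mono)
    fix y
    have "kappa x * ((indicator {0..x} y + indicator {x..0} y) * norm (g y / ckappa y))
        \<le> 4 * kappa (x - y) * norm (g y)"
    proof (cases "y \<in> {0..x} \<or> y \<in> {x..0}")
      case True
      then show ?thesis by (rule kappa_weight_between_le)
    qed (auto simp: indicator_def)
    then show "ennreal (kappa x) * ennreal ((indicator {0..x} y + indicator {x..0} y) *
        norm (g y / ckappa y)) \<le> ennreal (4 * kappa (x - y) * norm (g y))"
      by (simp add: ennreal_mult[symmetric])
  qed
  finally show ?thesis .
qed

lemma integrable_kappa_kernel: "integrable lborel (\<lambda>t. C * kappa t)"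
  using integrable_kappa by simp

text \<open>Orthogonality of \<open>h\<close> to \<open>\<kappa>\<close> lets \<open>P\<close> also be written as \<open>- \<integral>\<^sub>x\<^sup>\<infinity> \<kappa> h\<close>, so
  that \<open>P / \<kappa>\<close> is controlled on both half-lines.\<close>
lemma kappa_lower_primitive:
  fixes h :: "real \<Rightarrow> complex"
  assumes h: "L2 h" and orth: "(\<integral>x. ckappa x * h x \<partial>lebesgue) = 0"
  defines "P x \<equiv> \<integral>y. indicator {..x} y * (ckappa y * h y) \<partial>lebesgue"
  shows "has_primitive (\<lambda>x. ckappa x * h x) P"
    and "ennreal (norm (P x / ckappa x)) \<le> nn_convolution (\<lambda>t. 4 * kappa t) h x"
proof -
  define g where "g y = ckappa y * h y" for y
  have g_int: "integrable lebesgue g"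
    unfolding g_def by (rule integrable_mult_L2[OF L2_ckappa h])
  have g_loc: "set_integrable lebesgue {a..b} g" for a b
    unfolding g_def
    by (rule set_integrable_continuous_mult[OF continuous_on_ckappa set_integrable_L2[OF h]
          L2_borel_measurable[OF h]])
  show "has_primitive (\<lambda>x. ckappa x * h x) P"
    unfolding P_def g_def[symmetric]
    by (rule has_primitive_lower_halfline_integral[OF integrable_indicator_mult[OF g_int] g_loc]) auto
  have P_upper: "P x = - (\<integral>y. indicator {x<..} y * g y \<partial>lebesgue)"
  proof -
    have "0 = (\<integral>y. g y \<partial>lebesgue)"
      using orth by (simp add: g_def)
    also have "\<dots> = (\<integral>y. indicator {..x} y * g y + indicator {x<..} y * g y \<partial>lebesgue)"
      by (intro Bochner_Integration.integral_cong) (auto simp: indicator_def)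
    also have "\<dots> = P x + (\<integral>y. indicator {x<..} y * g y \<partial>lebesgue)"
      unfolding P_def g_def[symmetric]
      by (intro Bochner_Integration.integral_add integrable_indicator_mult[OF g_int]) auto
    finally show ?thesis by (simp add: eq_neg_iff_add_eq_0)
  qed
  show "ennreal (norm (P x / ckappa x)) \<le> nn_convolution (\<lambda>t. 4 * kappa t) h x"
  proof (cases "x \<le> 0")
    case True
    then show ?thesis
      unfolding P_def
      by (intro kappa_weighted_integral_bound integrable_indicator_mult[OF g_int[unfolded g_def]]) auto
  next
    case False
    then have "ennreal (norm ((\<integral>y. indicator {x<..} y * (ckappa y * h y) \<partial>lebesgue) / ckappa x))
        \<le> nn_convolution (\<lambda>t. 4 * kappa t) h x"
      by (intro kappa_weighted_integral_bound integrable_indicator_mult[OF g_int[unfolded g_def]]) auto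
    then show ?thesis
      unfolding P_upper g_def by (simp add: norm_minus_commute)
  qed
qed

lemma plus_mode_solvable:
  fixes h :: "real \<Rightarrow> complex"
  assumes h: "L2 h" and orth: "(\<integral>x. ckappa x * h x \<partial>lebesgue) = 0"
  shows "\<exists>w w1 w2. L2 w \<and> L2 w1 \<and> L2 w2 \<and> weak_dd w w1 w2 \<and>
    (\<forall>x. w2 x = complex_of_real (rho x) * w x + h x)"
proof -
  define P where "P x = (\<integral>y. indicator {..x} y * (ckappa y * h y) \<partial>lebesgue)" for x
  note P = kappa_lower_primitive[OF h orth, folded P_def]
  have "continuous_on UNIV P"
    by (rule has_primitive_continuous[OF P(1)])
      (use set_integrable_continuous_mult[OF continuous_on_ckappa set_integrable_L2[OF h]
          L2_borel_measurable[OF h]] in \<open>simp add: set_lebesgue_integral_eq_integral(1)\<close>)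
  then have P_cont: "continuous_on UNIV (\<lambda>y. P y / ckappa y)"
    by (intro continuous_intros continuous_on_ckappa) (simp_all add: ckappa_nonzero)
  define Q where "Q = antideriv (\<lambda>y. P y / ckappa y / ckappa y)"
  have "continuous_on UNIV (\<lambda>y. P y / ckappa y / ckappa y)"
    by (intro continuous_intros P_cont continuous_on_ckappa) (simp add: ckappa_nonzero)
  then have Q: "(Q has_vector_derivative P x / (ckappa x)\<^sup>2) (at x)" for x
    using has_vector_derivative_antideriv by (simp add: Q_def power2_eq_square)
  have Q_bound: "ennreal (norm (ckappa x * Q x)) \<le> nn_convolution (\<lambda>t. 4 * kappa t) (\<lambda>y. P y / ckappa y) x"
    for x
    using kappa_antideriv_bound[OF P_cont, of x] by (simp add: Q_def)
  have dkappa_quotient: "norm (complex_of_real (dkappa x) / ckappa x) \<le> 1" for x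
    using abs_tau_le_1[of x] kappa_pos[of x] by (simp add: ckappa_def dkappa_def)
  have "continuous_on UNIV (\<lambda>x. complex_of_real (rho x))"
    by (intro continuous_intros continuous_on_rho)
  then show ?thesis
    by (rule L2_solution_by_reduction_of_order[OF has_vector_derivative_ckappa
          has_vector_derivative_dkappa _ ckappa_nonzero dkappa_quotient _ integrable_kappa_kernel _
          h P(1) P(2) Q Q_bound])
      (use abs_rho_le_1 in auto)
qed

section \<open>The minus mode\<close>

text \<open>The Jost solution of \<open>u'' = (\<rho> + 2i) u\<close>, decaying at \<open>+\<infinity>\<close>: the ansatz
  \<open>(tanh (x/2) + k) e\<^sup>-\<^sup>k\<^sup>x\<^sup>/\<^sup>2\<close> works exactly when \<open>k\<^sup>2 = 1 + 8i\<close>.\<close>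
definition jost_k :: complex where
  "jost_k = csqrt (1 + 8 * \<i>)"

definition ctau :: "real \<Rightarrow> complex" where
  "ctau x = complex_of_real (tau x)"

definition jost_exp :: "real \<Rightarrow> complex" where
  "jost_exp x = exp (- (jost_k * complex_of_real x) / 2)"

definition jost :: "real \<Rightarrow> complex" where
  "jost x = (ctau x + jost_k) * jost_exp x"

definition djost :: "real \<Rightarrow> complex" where
  "djost x = jost_exp x * (complex_of_real (kappa x ^ 2) / 2 - jost_k * ctau x / 2 - jost_k\<^sup>2 / 2)"

lemma jost_k_sq: "jost_k\<^sup>2 = 1 + 8 * \<i>"
  by (simp add: jost_k_def)

lemma Re_jost_k_ge_1: "1 \<le> Re jost_k"
proof -
  have "Re (jost_k\<^sup>2) = 1" by (simp add: jost_k_sq)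
  then have "(Re jost_k)\<^sup>2 = 1 + (Im jost_k)\<^sup>2" by (simp add: Re_power2)
  moreover have "0 \<le> Re jost_k" by (simp add: jost_k_def Re_csqrt)
  ultimately show ?thesis
    by (metis le_add_same_cancel1 one_power2 power2_le_imp_le zero_le_power2)
qed

lemma Im_jost_k_nonzero: "Im jost_k \<noteq> 0"
proof
  assume "Im jost_k = 0"
  moreover have "Im (jost_k\<^sup>2) = 8" by (simp add: jost_k_sq)
  ultimately show False by (simp add: Im_power2)
qed

lemma norm_ctau_le_1: "norm (ctau x) \<le> 1"
  using abs_tau_le_1[of x] by (simp add: ctau_def)

lemma norm_ctau_plus_jost_k_bounds:
  "\<bar>Im jost_k\<bar> \<le> norm (ctau x + jost_k)" "norm (ctau x + jost_k) \<le> 1 + norm jost_k"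
  using abs_Im_le_cmod[of "ctau x + jost_k"] norm_triangle_ineq[of "ctau x" jost_k] norm_ctau_le_1[of x]
  by (simp_all add: ctau_def)

lemma norm_jost_exp: "norm (jost_exp x) = exp (- (Re jost_k * x) / 2)"
  by (simp add: jost_exp_def)

lemma jost_nonzero: "jost x \<noteq> 0"
  using norm_ctau_plus_jost_k_bounds(1)[of x] Im_jost_k_nonzero by (auto simp: jost_def jost_exp_def)

lemma has_vector_derivative_jost_exp:
  "(jost_exp has_vector_derivative - jost_k / 2 * jost_exp x) (at x)"
proof -
  have "((\<lambda>x. - (jost_k * complex_of_real x) / 2) has_vector_derivative - jost_k / 2) (at x)"
    using has_vector_derivative_of_real[OF DERIV_ident]
    by (auto intro!: derivative_eq_intros)
  from field_vector_diff_chain_at[OF this DERIV_exp] show ?thesis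
    unfolding jost_exp_def[abs_def] by (simp add: o_def)
qed

lemma has_vector_derivative_ctau:
  "(ctau has_vector_derivative complex_of_real (kappa x ^ 2 / 2)) (at x)"
  unfolding ctau_def[abs_def] by (rule has_vector_derivative_of_real[OF has_real_derivative_tau])

lemma has_vector_derivative_jost: "(jost has_vector_derivative djost x) (at x)"
proof -
  have "((\<lambda>x. ctau x + jost_k) has_vector_derivative complex_of_real (kappa x ^ 2 / 2)) (at x)"
    using has_vector_derivative_add[OF has_vector_derivative_ctau has_vector_derivative_const] by simp
  from has_vector_derivative_mult[OF this has_vector_derivative_jost_exp] show ?thesis
    unfolding jost_def[abs_def]
    by (rule has_vector_derivative_eq_rhs) (simp add: djost_def field_simps power2_eq_square)
qed

lemma has_vector_derivative_djost:
  "(djost has_vector_derivative (complex_of_real (rho x) + 2 * \<i>) * jost x) (at x)"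
proof -
  have "((\<lambda>x. kappa x * kappa x) has_real_derivative
      dkappa x * kappa x + dkappa x * kappa x) (at x)"
    by (rule DERIV_mult[OF has_real_derivative_kappa has_real_derivative_kappa])
  then have "((\<lambda>x. kappa x ^ 2) has_real_derivative 2 * kappa x * dkappa x) (at x)"
    by (simp add: power2_eq_square algebra_simps)
  then have "((\<lambda>x. complex_of_real (kappa x ^ 2)) has_vector_derivative
      complex_of_real (2 * kappa x * dkappa x)) (at x)"
    by (rule has_vector_derivative_of_real)
  then have "((\<lambda>x. complex_of_real (kappa x ^ 2) / 2 - jost_k * ctau x / 2 - jost_k\<^sup>2 / 2)
      has_vector_derivative complex_of_real (2 * kappa x * dkappa x) / 2
        - jost_k * complex_of_real (kappa x ^ 2 / 2) / 2 - 0) (at x)"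
    by (intro has_vector_derivative_diff has_vector_derivative_divide
        has_vector_derivative_mult_right has_vector_derivative_ctau has_vector_derivative_const)
  from has_vector_derivative_mult[OF has_vector_derivative_jost_exp this] show ?thesis
    unfolding djost_def[abs_def]
  proof (rule has_vector_derivative_eq_rhs)
    have rho: "complex_of_real (rho x) = 1/4 - (ckappa x)\<^sup>2 / 2"
      by (simp add: rho_eq_kappa ckappa_def)
    have i2: "2 * \<i> = (jost_k\<^sup>2 - 1) / 4"
      by (simp add: jost_k_sq)
    show "jost_exp x * (complex_of_real (2 * kappa x * dkappa x) / 2
          - jost_k * complex_of_real (kappa x ^ 2 / 2) / 2 - 0) +
        - jost_k / 2 * jost_exp x * (complex_of_real (kappa x ^ 2) / 2 - jost_k * ctau x / 2 - jost_k\<^sup>2 / 2)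
        = (complex_of_real (rho x) + 2 * \<i>) * jost x"
      unfolding rho i2 jost_def
      by (simp add: dkappa_def ctau_def ckappa_def field_simps power2_eq_square power3_eq_cube)
  qed
qed

lemma continuous_on_jost: "continuous_on UNIV jost"
  unfolding jost_def ctau_def jost_exp_def by (intro continuous_intros continuous_on_tau) auto

definition jost_const :: real where
  "jost_const = (1 + norm jost_k) / \<bar>Im jost_k\<bar>"

lemma jost_const_pos: "0 < jost_const"
  using Im_jost_k_nonzero by (simp add: jost_const_def add_pos_nonneg)

lemma norm_jost_decay:
  assumes "x \<le> y"
  shows "norm (jost y) \<le> jost_const * kappa (x - y) * norm (jost x)"
proof -
  have "exp (- (Re jost_k * (y - x)) / 2) \<le> exp (- \<bar>x - y\<bar> / 2)"
    using assms Re_jost_k_ge_1 by (simp add: mult_right_mono abs_if)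
  also have "\<dots> \<le> kappa (x - y)"
    by (rule exp_le_kappa)
  finally have decay: "exp (- (Re jost_k * (y - x)) / 2) \<le> kappa (x - y)" .
  have "exp (- (Re jost_k * y) / 2) = exp (- (Re jost_k * (y - x)) / 2) * exp (- (Re jost_k * x) / 2)"
    by (simp add: exp_add[symmetric] algebra_simps)
  then have "norm (jost y) = norm (ctau y + jost_k) *
      (exp (- (Re jost_k * (y - x)) / 2) * exp (- (Re jost_k * x) / 2))"
    by (simp add: jost_def norm_mult norm_jost_exp)
  also have "\<dots> \<le> (1 + norm jost_k) * (kappa (x - y) * exp (- (Re jost_k * x) / 2))"
    by (intro mult_mono norm_ctau_plus_jost_k_bounds mult_right_mono decay) auto
  also have "\<dots> = jost_const * kappa (x - y) * (\<bar>Im jost_k\<bar> * exp (- (Re jost_k * x) / 2))"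
    using Im_jost_k_nonzero by (simp add: jost_const_def field_simps)
  also have "\<dots> \<le> jost_const * kappa (x - y) * (norm (ctau x + jost_k) * exp (- (Re jost_k * x) / 2))"
    using jost_const_pos by (intro mult_left_mono mult_right_mono norm_ctau_plus_jost_k_bounds) auto
  also have "\<dots> = jost_const * kappa (x - y) * norm (jost x)"
    by (simp add: jost_def norm_mult norm_jost_exp)
  finally show ?thesis .
qed

lemma norm_djost_div_jost_le:
  "norm (djost x / jost x) \<le> (1 + norm jost_k + (norm jost_k)\<^sup>2) / \<bar>Im jost_k\<bar>"
proof -
  have "djost x / jost x =
      (complex_of_real (kappa x ^ 2) / 2 - jost_k * ctau x / 2 - jost_k\<^sup>2 / 2) / (ctau x + jost_k)"
    using jost_nonzero[of x] by (simp add: djost_def jost_def jost_exp_def)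
  moreover have "norm (complex_of_real (kappa x ^ 2) / 2 - jost_k * ctau x / 2 - jost_k\<^sup>2 / 2)
      \<le> 1 + norm jost_k + (norm jost_k)\<^sup>2"
  proof -
    have "norm (complex_of_real (kappa x ^ 2) / 2) \<le> 1"
      using power_le_one[OF kappa_nonneg kappa_le_1, of x 2] by (simp add: norm_divide norm_power)
    moreover have "norm (jost_k * ctau x / 2) \<le> norm jost_k"
    proof -
      have "norm jost_k * norm (ctau x) \<le> norm jost_k"
        using mult_left_mono[OF norm_ctau_le_1[of x] norm_ge_zero[of jost_k]] by simp
      moreover have "norm (jost_k * ctau x / 2) = norm jost_k * norm (ctau x) / 2"
        by (simp add: norm_mult norm_divide)
      ultimately show ?thesis using norm_ge_zero[of jost_k] by linarith
    qed
    moreover have "norm (jost_k\<^sup>2 / 2) \<le> (norm jost_k)\<^sup>2"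
      by (simp add: norm_divide norm_power)
    ultimately show ?thesis
      using norm_triangle_ineq4[of "complex_of_real (kappa x ^ 2) / 2 - jost_k * ctau x / 2" "jost_k\<^sup>2 / 2"]
        norm_triangle_ineq4[of "complex_of_real (kappa x ^ 2) / 2" "jost_k * ctau x / 2"]
      by linarith
  qed
  ultimately show ?thesis
    using norm_ctau_plus_jost_k_bounds(1)[of x] Im_jost_k_nonzero
    by (auto simp: norm_divide intro!: frac_le)
qed

lemma jost_coefficients_bounded:
  obtains B where "\<And>x. norm (djost x / jost x) \<le> B"
    "\<And>x. norm (complex_of_real (rho x) + 2 * \<i>) \<le> B"
proof
  define B where "B = (1 + norm jost_k + (norm jost_k)\<^sup>2) / \<bar>Im jost_k\<bar> + 3"
  have three: "norm (complex_of_real (rho x) + 2 * \<i>) \<le> 3" for x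
    using norm_triangle_ineq[of "complex_of_real (rho x)" "2 * \<i>"] abs_rho_le_1[of x]
    by (simp add: norm_mult)
  have "0 \<le> (1 + norm jost_k + (norm jost_k)\<^sup>2) / \<bar>Im jost_k\<bar>"
    by simp
  then show "norm (djost x / jost x) \<le> B" "norm (complex_of_real (rho x) + 2 * \<i>) \<le> B" for x
    using three[of x] norm_djost_div_jost_le[of x] unfolding B_def by linarith+
qed

lemma borel_measurable_jost [measurable]: "jost \<in> borel_measurable lebesgue"
  by (rule borel_measurable_continuous_lebesgue[OF continuous_on_jost])

lemma L2_indicator_jost: "L2 (\<lambda>y. indicator {x..} y * jost y)"
proof (rule L2_dominated[OF L2_translate_kappa[of x], where B = "jost_const * norm (jost x)"])
  note [measurable] = borel_measurable_ident_lebesgue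
  show "(\<lambda>y. indicator {x..} y * jost y) \<in> borel_measurable lebesgue"
    by measurable
  show "AE y in lebesgue. norm (indicator {x..} y * jost y)
      \<le> jost_const * norm (jost x) * norm (complex_of_real (kappa (x - y)))"
    using norm_jost_decay[of x] jost_const_pos by (auto simp: indicator_def mult_ac)
qed

lemma L2_indicator_inverse_jost: "L2 (\<lambda>y. indicator {..x} y / jost y)"
proof (rule L2_dominated[OF L2_translate_kappa[of x], where B = "jost_const / norm (jost x)"])
  note [measurable] = borel_measurable_ident_lebesgue
  show "(\<lambda>y. indicator {..x} y / jost y) \<in> borel_measurable lebesgue"
    by measurable
  have "1 / norm (jost y) \<le> jost_const / norm (jost x) * kappa (x - y)" if "y \<le> x" for y
    using norm_jost_decay[OF that] kappa_minus[of "x - y"] jost_nonzero[of x] jost_nonzero[of y]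
    by (simp add: field_simps)
  then show "AE y in lebesgue. norm (indicator {..x} y / jost y)
      \<le> jost_const / norm (jost x) * norm (complex_of_real (kappa (x - y)))"
    using jost_const_pos by (auto simp: indicator_def norm_divide)
qed

lemma jost_upper_integral_bound:
  fixes g :: "real \<Rightarrow> complex"
  assumes "integrable lebesgue (\<lambda>y. indicator {x..} y * (jost y * g y))"
  shows "ennreal (norm ((\<integral>y. indicator {x..} y * (jost y * g y) \<partial>lebesgue) / jost x))
    \<le> nn_convolution (\<lambda>t. jost_const * kappa t) g x"
  unfolding nn_convolution_def integral_divide_zero[symmetric]
proof (rule norm_integral_le_nn_integral)
  show "integrable lebesgue (\<lambda>y. indicator {x..} y * (jost y * g y) / jost x)"
    using assms by simp
  show "norm (indicator {x..} y * (jost y * g y) / jost x) \<le> jost_const * kappa (x - y) * norm (g y)"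
    for y
  proof (cases "x \<le> y")
    case True
    have "norm (jost y) / norm (jost x) \<le> jost_const * kappa (x - y)"
      using norm_jost_decay[OF True] jost_nonzero[of x] by (simp add: divide_le_eq)
    then have "norm (jost y) / norm (jost x) * norm (g y) \<le> jost_const * kappa (x - y) * norm (g y)"
      by (rule mult_right_mono) simp
    then show ?thesis
      using True by (simp add: norm_mult norm_divide mult_ac)
  qed (use jost_const_pos in simp)
qed

lemma jost_lower_integral_bound:
  fixes p :: "real \<Rightarrow> complex"
  assumes "integrable lebesgue (\<lambda>y. indicator {..x} y * (p y / jost y))"
  shows "ennreal (norm (jost x * (\<integral>y. indicator {..x} y * (p y / jost y) \<partial>lebesgue)))
    \<le> nn_convolution (\<lambda>t. jost_const * kappa t) p x"
  unfolding nn_convolution_def integral_mult_right_zero[symmetric]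
proof (rule norm_integral_le_nn_integral)
  show "integrable lebesgue (\<lambda>y. jost x * (indicator {..x} y * (p y / jost y)))"
    using integrable_mult_right[OF assms, of "jost x"] by simp
  show "norm (jost x * (indicator {..x} y * (p y / jost y))) \<le> jost_const * kappa (x - y) * norm (p y)"
    for y
  proof (cases "y \<le> x")
    case True
    have "norm (jost x) / norm (jost y) \<le> jost_const * kappa (x - y)"
      using norm_jost_decay[OF True] kappa_minus[of "x - y"] jost_nonzero[of y]
      by (simp add: divide_le_eq)
    then have "norm (jost x) / norm (jost y) * norm (p y) \<le> jost_const * kappa (x - y) * norm (p y)"
      by (rule mult_right_mono) simp
    then show ?thesis
      using True by (simp add: norm_mult norm_divide mult_ac)
  qed (use jost_const_pos in simp)
qed

lemma jost_upper_primitive: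
  fixes g :: "real \<Rightarrow> complex"
  assumes g: "L2 g"
  defines "P x \<equiv> - (\<integral>y. indicator {x..} y * (jost y * g y) \<partial>lebesgue)"
  shows "has_primitive (\<lambda>x. jost x * g x) P"
    and "ennreal (norm (P x / jost x)) \<le> nn_convolution (\<lambda>t. jost_const * kappa t) g x"
    and "continuous_on UNIV P"
proof -
  have jg_upper: "integrable lebesgue (\<lambda>y. indicator {x..} y * (jost y * g y))" for x
    using integrable_mult_L2[OF L2_indicator_jost g] by (simp add: mult.assoc)
  have jg_loc: "set_integrable lebesgue {a..b} (\<lambda>y. jost y * g y)" for a b
    by (rule set_integrable_continuous_mult[OF continuous_on_jost set_integrable_L2[OF g]
          L2_borel_measurable[OF g]])
  show P: "has_primitive (\<lambda>x. jost x * g x) P"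
    unfolding P_def by (rule has_primitive_upper_halfline_integral[OF jg_upper jg_loc])
  show "ennreal (norm (P x / jost x)) \<le> nn_convolution (\<lambda>t. jost_const * kappa t) g x"
    using jost_upper_integral_bound[OF jg_upper, of x] by (simp add: P_def)
  show "continuous_on UNIV P"
    by (rule has_primitive_continuous[OF P])
      (use jg_loc in \<open>simp add: set_lebesgue_integral_eq_integral(1)\<close>)
qed

lemma minus_mode_solvable:
  fixes g :: "real \<Rightarrow> complex"
  assumes g: "L2 g"
  shows "\<exists>z z1 z2. L2 z \<and> L2 z1 \<and> L2 z2 \<and> weak_dd z z1 z2 \<and>
    (\<forall>x. z2 x = (complex_of_real (rho x) + 2 * \<i>) * z x + g x)"
proof -
  define P where "P x = - (\<integral>y. indicator {x..} y * (jost y * g y) \<partial>lebesgue)" for x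
  note P = jost_upper_primitive[OF g, folded P_def]
  have P_cont: "continuous_on UNIV (\<lambda>x. P x / jost x)"
    by (intro continuous_intros P(3) continuous_on_jost) (simp_all add: jost_nonzero)
  have P_L2: "L2 (\<lambda>x. P x / jost x)"
    using jost_const_pos
    by (intro L2_nn_convolution_bound[OF g integrable_kappa_kernel _
          borel_measurable_continuous_lebesgue[OF P_cont] P(2)]) simp
  have q_lower: "integrable lebesgue (\<lambda>y. indicator {..x} y * (P y / jost y / jost y))" for x
    using integrable_mult_L2[OF L2_indicator_inverse_jost P_L2] by (simp add: field_simps)
  have q_cont: "continuous_on UNIV (\<lambda>y. P y / jost y / jost y)"
    by (intro continuous_intros P_cont continuous_on_jost) (simp add: jost_nonzero)
  define Q where "Q x = (\<integral>y. indicator {..x} y * (P y / jost y / jost y) \<partial>lebesgue)" for x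
  have "has_primitive (\<lambda>y. P y / jost y / jost y) Q"
    unfolding Q_def[abs_def]
    by (rule has_primitive_lower_halfline_integral[OF q_lower set_integrable_continuous[OF q_cont]])
  then have Q: "(Q has_vector_derivative P x / (jost x)\<^sup>2) (at x)" for x
    using has_primitive_has_vector_derivative[OF _ q_cont] by (simp add: power2_eq_square)
  have Q_bound: "ennreal (norm (jost x * Q x))
      \<le> nn_convolution (\<lambda>t. jost_const * kappa t) (\<lambda>y. P y / jost y) x" for x
    using jost_lower_integral_bound[of x "\<lambda>y. P y / jost y"] q_lower[of x] by (simp add: Q_def)
  obtain B where B: "\<And>x. norm (djost x / jost x) \<le> B"
    "\<And>x. norm (complex_of_real (rho x) + 2 * \<i>) \<le> B"
    by (rule jost_coefficients_bounded) (rule that)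
  have "continuous_on UNIV (\<lambda>x. complex_of_real (rho x) + 2 * \<i>)"
    by (intro continuous_intros continuous_on_rho)
  moreover have "0 \<le> jost_const * kappa t" for t
    using jost_const_pos by simp
  ultimately show ?thesis
    by (intro L2_solution_by_reduction_of_order[OF has_vector_derivative_jost has_vector_derivative_djost
          _ jost_nonzero B integrable_kappa_kernel _ g P(1) P(2) Q Q_bound])
qed

section \<open>Integrable functions with limits at infinity\<close>

lemma emeasure_lborel_halfline_infinite:
  "emeasure lborel {X::real..} = \<infinity>" "emeasure lborel {..X::real} = \<infinity>"
proof (rule_tac [!] ccontr)
  assume "emeasure lborel {X..} \<noteq> \<infinity>"
  then obtain r where r: "emeasure lborel {X..} = ennreal r" "0 \<le> r"
    by (cases "emeasure lborel {X..}") auto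
  have "emeasure lborel {X..X + r + 1} \<le> emeasure lborel {X..}"
    by (rule emeasure_mono) auto
  then show False using r by simp
next
  assume "emeasure lborel {..X} \<noteq> \<infinity>"
  then obtain r where r: "emeasure lborel {..X} = ennreal r" "0 \<le> r"
    by (cases "emeasure lborel {..X}") auto
  have "emeasure lborel {X - r - 1..X} \<le> emeasure lborel {..X}"
    by (rule emeasure_mono) auto
  then show False using r by simp
qed

lemma integrable_bounded_below_on_halfline:
  fixes F :: "real \<Rightarrow> 'a::{banach, second_countable_topology}"
  assumes F: "integrable lebesgue F"
    and bound: "(\<forall>x\<ge>X. c \<le> norm (F x)) \<or> (\<forall>x\<le>X. c \<le> norm (F x))"
  shows "c \<le> 0"
proof (rule ccontr)
  assume c: "\<not> c \<le> 0"
  define A where "A = (if \<forall>x\<ge>X. c \<le> norm (F x) then {X..} else {..X})"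
  have A: "A \<in> sets lebesgue" "emeasure lebesgue A = \<infinity>" "\<And>x. x \<in> A \<Longrightarrow> c \<le> norm (F x)"
    using bound by (auto simp: A_def emeasure_lborel_halfline_infinite split: if_splits)
  have "integrable lebesgue (\<lambda>x. indicator A x * c)"
  proof (rule Bochner_Integration.integrable_bound[OF integrable_norm[OF F]])
    show "(\<lambda>x. indicator A x * c) \<in> borel_measurable lebesgue"
      using A(1) by measurable
    show "AE x in lebesgue. norm (indicator A x * c) \<le> norm (norm (F x))"
      using A(3) c by (auto simp: indicator_def)
  qed
  then have "integrable lebesgue (\<lambda>x. indicator A x * c * (1 / c))"
    by (rule integrable_mult_left)
  then have "integrable lebesgue (indicator A :: real \<Rightarrow> real)"
    using c by simp
  then show False
    using A(2) by (simp add: integrable_indicator_iff)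
qed

lemma integrable_tendsto_imp_zero:
  fixes W :: "real \<Rightarrow> complex"
  assumes W: "integrable lebesgue W" and lim: "(W \<longlongrightarrow> L) at_top \<or> (W \<longlongrightarrow> L) at_bot"
  shows "L = 0"
proof (rule ccontr)
  assume "L \<noteq> 0"
  then have e: "0 < norm L / 2" by simp
  have far: "norm L / 2 \<le> norm (W x)" if "dist (W x) L < norm L / 2" for x
    using that norm_triangle_ineq2[of L "W x"] by (simp add: dist_norm norm_minus_commute)
  from lim have "(\<exists>X. \<forall>x\<ge>X. dist (W x) L < norm L / 2) \<or> (\<exists>X. \<forall>x\<le>X. dist (W x) L < norm L / 2)"
  proof
    assume "(W \<longlongrightarrow> L) at_top"
    from tendstoD[OF this e] show ?thesis
      unfolding eventually_at_top_linorder by blast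
  next
    assume "(W \<longlongrightarrow> L) at_bot"
    from tendstoD[OF this e] show ?thesis
      unfolding eventually_at_bot_linorder by blast
  qed
  then have "(\<exists>X. \<forall>x\<ge>X. norm L / 2 \<le> norm (W x)) \<or> (\<exists>X. \<forall>x\<le>X. norm L / 2 \<le> norm (W x))"
    using far by blast
  then obtain X where "(\<forall>x\<ge>X. norm L / 2 \<le> norm (W x)) \<or> (\<forall>x\<le>X. norm L / 2 \<le> norm (W x))"
    by blast
  then have "norm L / 2 \<le> 0"
    by (rule integrable_bounded_below_on_halfline[OF W])
  with e show False by simp
qed

lemma has_vector_derivative_zero_constant:
  fixes f :: "real \<Rightarrow> complex"
  assumes "\<And>x. (f has_vector_derivative 0) (at x)"
  shows "f x = f y"
proof -
  have "\<exists>c. \<forall>x\<in>UNIV. f x = c"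
    by (rule has_derivative_zero_constant[of UNIV])
      (use assms in \<open>auto simp: has_vector_derivative_def has_derivative_at_withinI\<close>)
  then show ?thesis by auto
qed

lemma tendsto_integral_indicator_at_top:
  fixes g :: "real \<Rightarrow> complex" and S :: "real \<Rightarrow> real set"
  assumes g: "integrable lebesgue g" and S: "\<And>t. S t \<in> sets lebesgue"
    and mono: "\<And>y. \<forall>\<^sub>F t in at_top. indicator (S t) y = (indicator U y :: complex)"
    and U: "U \<in> sets lebesgue"
  shows "((\<lambda>t. \<integral>y. indicator (S t) y * g y \<partial>lebesgue) \<longlongrightarrow> (\<integral>y. indicator U y * g y \<partial>lebesgue)) at_top"
proof (rule integral_dominated_convergence_at_top[where w = "\<lambda>y. norm (g y)"])
  show "(\<lambda>y. indicator U y * g y) \<in> borel_measurable lebesgue"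
    using integrable_indicator_mult[OF g U] by (rule borel_measurable_integrable)
  show "(\<lambda>y. indicator (S t) y * g y) \<in> borel_measurable lebesgue" for t
    using integrable_indicator_mult[OF g S] by (rule borel_measurable_integrable)
  show "integrable lebesgue (\<lambda>y. norm (g y))"
    using g by simp
  show "AE y in lebesgue. ((\<lambda>t. indicator (S t) y * g y) \<longlongrightarrow> indicator U y * g y) at_top"
    using mono by (auto intro!: tendsto_eventually elim: eventually_mono)
  show "\<forall>\<^sub>F t in at_top. AE y in lebesgue. norm (indicator (S t) y * g y) \<le> norm (g y)"
    by (auto simp: indicator_def norm_mult)
qed

lemma has_primitive_eq_set_integral:
  fixes g F :: "real \<Rightarrow> complex"
  assumes "integrable lebesgue g" "has_primitive g F" "a \<le> b"
  shows "F b - F a = (\<integral>y. indicator {a..b} y * g y \<partial>lebesgue)"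
proof -
  have "set_integrable lebesgue {a..b} g"
    using integrable_indicator_mult[OF assms(1)] by (simp add: set_integrable_complex_iff)
  from has_integral_unique[OF has_primitiveD[OF assms(2,3)] has_integral_set_lebesgue_complex[OF this]]
  show ?thesis .
qed

lemma has_primitive_tendsto_at_top:
  fixes g F :: "real \<Rightarrow> complex"
  assumes g: "integrable lebesgue g" and F: "has_primitive g F"
  shows "(F \<longlongrightarrow> F 0 + (\<integral>y. indicator {0..} y * g y \<partial>lebesgue)) at_top"
proof -
  have "\<forall>\<^sub>F t in at_top. indicator {0..t} y = (indicator {0..} y :: complex)" for y :: real
    using eventually_ge_at_top[of y] by eventually_elim (auto simp: indicator_def)
  then have "((\<lambda>t. F 0 + (\<integral>y. indicator {0..t} y * g y \<partial>lebesgue)) \<longlongrightarrow>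
      F 0 + (\<integral>y. indicator {0..} y * g y \<partial>lebesgue)) at_top"
    by (intro tendsto_add tendsto_const tendsto_integral_indicator_at_top[OF g]) auto
  moreover have "\<forall>\<^sub>F t in at_top. F 0 + (\<integral>y. indicator {0..t} y * g y \<partial>lebesgue) = F t"
    using eventually_ge_at_top[of 0]
    by eventually_elim (simp add: has_primitive_eq_set_integral[OF g F, symmetric])
  ultimately show ?thesis
    by (rule Lim_transform_eventually)
qed

lemma has_primitive_tendsto_at_bot:
  fixes g F :: "real \<Rightarrow> complex"
  assumes g: "integrable lebesgue g" and F: "has_primitive g F"
  shows "(F \<longlongrightarrow> F 0 - (\<integral>y. indicator {..0} y * g y \<partial>lebesgue)) at_bot"
proof -
  have "\<forall>\<^sub>F t in at_top. indicator {-t..0} y = (indicator {..0} y :: complex)" for y :: real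
    using eventually_ge_at_top[of "- y"] by eventually_elim (auto simp: indicator_def)
  then have "((\<lambda>t. F 0 - (\<integral>y. indicator {-t..0} y * g y \<partial>lebesgue)) \<longlongrightarrow>
      F 0 - (\<integral>y. indicator {..0} y * g y \<partial>lebesgue)) at_top"
    by (intro tendsto_diff tendsto_const tendsto_integral_indicator_at_top[OF g]) auto
  moreover have "\<forall>\<^sub>F t in at_top. F 0 - (\<integral>y. indicator {-t..0} y * g y \<partial>lebesgue) = F (- t)"
    using eventually_ge_at_top[of 0]
    by eventually_elim (simp add: has_primitive_eq_set_integral[OF g F, symmetric])
  ultimately have "((\<lambda>t. F (- t)) \<longlongrightarrow> F 0 - (\<integral>y. indicator {..0} y * g y \<partial>lebesgue)) at_top"
    by (rule Lim_transform_eventually)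
  then have "((\<lambda>x. F (- (- x))) \<longlongrightarrow> F 0 - (\<integral>y. indicator {..0} y * g y \<partial>lebesgue)) at_bot"
    by (rule filterlim_compose[OF _ filterlim_uminus_at_top_at_bot])
  then show ?thesis
    by simp
qed

text \<open>The limits of an integrable primitive at \<open>\<plusminus>\<infinity>\<close> must vanish.\<close>
lemma integral_eq_0_if_integrable_primitive:
  fixes g F :: "real \<Rightarrow> complex"
  assumes g: "integrable lebesgue g" and F: "has_primitive g F" "integrable lebesgue F"
  shows "(\<integral>x. g x \<partial>lebesgue) = 0"
proof -
  define Lp where "Lp = (\<integral>y. indicator {0..} y * g y \<partial>lebesgue)"
  define Lm where "Lm = (\<integral>y. indicator {..0} y * g y \<partial>lebesgue)"
  have right: "F 0 + Lp = 0"
    using integrable_tendsto_imp_zero[OF F(2)] has_primitive_tendsto_at_top[OF g F(1)]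
    unfolding Lp_def by blast
  have left: "F 0 - Lm = 0"
    using integrable_tendsto_imp_zero[OF F(2)] has_primitive_tendsto_at_bot[OF g F(1)]
    unfolding Lm_def by blast
  have "(\<integral>y. g y \<partial>lebesgue) = (\<integral>y. indicator {0..} y * g y + indicator {..0} y * g y \<partial>lebesgue)"
  proof (rule integral_cong_AE)
    show "g \<in> borel_measurable lebesgue"
      using g by (rule borel_measurable_integrable)
    show "(\<lambda>y. indicator {0..} y * g y + indicator {..0} y * g y) \<in> borel_measurable lebesgue"
      using integrable_indicator_mult[OF g, of "{0..}"] integrable_indicator_mult[OF g, of "{..0}"]
      by (intro borel_measurable_integrable Bochner_Integration.integrable_add) auto
    show "AE y in lebesgue. g y = indicator {0..} y * g y + indicator {..0} y * g y"
      using AE_lebesgue_neq[of 0] by eventually_elim (auto simp: indicator_def)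
  qed
  also have "\<dots> = Lp + Lm"
    unfolding Lp_def Lm_def by (intro Bochner_Integration.integral_add integrable_indicator_mult[OF g]) auto
  also have "\<dots> = 0"
    using right left by (simp add: algebra_simps eq_neg_iff_add_eq_0)
  finally show ?thesis .
qed

section \<open>Homogeneous mode equations and the compatibility condition\<close>

lemma plus_mode_orthogonal:
  fixes w w1 h :: "real \<Rightarrow> complex"
  assumes w: "L2 w" "L2 w1" "\<And>x. (w has_vector_derivative w1 x) (at x)"
    and w1: "has_primitive (\<lambda>x. complex_of_real (rho x) * w x + h x) w1"
    and h: "L2 h"
  shows "(\<integral>x. ckappa x * h x \<partial>lebesgue) = 0"
proof (rule integral_eq_0_if_integrable_primitive)
  have f: "L2 (\<lambda>x. complex_of_real (rho x) * w x + h x)"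
    by (intro L2_add L2_rho_mult w(1) h)
  have "has_primitive (\<lambda>x. complex_of_real (dkappa x) * w1 x +
      ckappa x * (complex_of_real (rho x) * w x + h x)) (\<lambda>x. ckappa x * w1 x)"
    by (rule has_primitive_mult[OF w1 set_integrable_L2[OF f] L2_borel_measurable[OF f]
          has_vector_derivative_ckappa])
      (intro continuous_intros continuous_on_dkappa)
  moreover have "has_primitive (\<lambda>x. w x * (complex_of_real (rho x) * ckappa x) +
      w1 x * complex_of_real (dkappa x)) (\<lambda>x. w x * complex_of_real (dkappa x))"
    by (rule has_primitive_of_derivative)
      (rule has_vector_derivative_mult[OF w(3) has_vector_derivative_dkappa])
  ultimately show "has_primitive (\<lambda>x. ckappa x * h x)
      (\<lambda>x. ckappa x * w1 x - w x * complex_of_real (dkappa x))"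
    by (rule has_primitive_cong[OF has_primitive_diff]) (simp_all add: algebra_simps)
  show "integrable lebesgue (\<lambda>x. ckappa x * w1 x - w x * complex_of_real (dkappa x))"
    by (intro Bochner_Integration.integrable_diff integrable_mult_L2 L2_ckappa L2_dkappa w)
  show "integrable lebesgue (\<lambda>x. ckappa x * h x)"
    by (rule integrable_mult_L2[OF L2_ckappa h])
qed

text \<open>The Wronskian of \<open>w\<close> and \<open>\<kappa>\<close> is constant and integrable, hence zero.\<close>
lemma plus_mode_homogeneous:
  fixes w w1 :: "real \<Rightarrow> complex"
  assumes w: "L2 w" "L2 w1" "\<And>x. (w has_vector_derivative w1 x) (at x)"
    and w1: "\<And>x. (w1 has_vector_derivative complex_of_real (rho x) * w x) (at x)"
  shows "\<exists>C. \<forall>x. w x = C * ckappa x"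
proof -
  define W where "W x = w1 x * ckappa x - w x * complex_of_real (dkappa x)" for x
  have "(W has_vector_derivative 0) (at x)" for x
  proof -
    have "(W has_vector_derivative
        (w1 x * complex_of_real (dkappa x) + complex_of_real (rho x) * w x * ckappa x) -
        (w x * (complex_of_real (rho x) * ckappa x) + w1 x * complex_of_real (dkappa x))) (at x)"
      unfolding W_def[abs_def]
      by (intro has_vector_derivative_diff has_vector_derivative_mult w(3) w1
          has_vector_derivative_ckappa has_vector_derivative_dkappa)
    then show ?thesis by (simp add: algebra_simps)
  qed
  then have W_const: "W x = W 0" for x
    by (rule has_vector_derivative_zero_constant)
  have "integrable lebesgue W"
    unfolding W_def by (intro Bochner_Integration.integrable_diff integrable_mult_L2 L2_ckappa L2_dkappa w)
  moreover have "(W \<longlongrightarrow> W 0) at_top"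
    using W_const by (simp add: tendsto_eventually)
  ultimately have W_zero: "W x = 0" for x
    using integrable_tendsto_imp_zero W_const by metis
  define R where "R x = w x * (1 / ckappa x)" for x
  have "(R has_vector_derivative 0) (at x)" for x
  proof -
    have "(R has_vector_derivative
        w x * (- complex_of_real (dkappa x) / (ckappa x)\<^sup>2) + w1 x * (1 / ckappa x)) (at x)"
      unfolding R_def[abs_def]
      by (intro has_vector_derivative_mult w(3) has_vector_derivative_inverse ckappa_nonzero
          has_vector_derivative_ckappa)
    moreover have "w x * (- complex_of_real (dkappa x) / (ckappa x)\<^sup>2) + w1 x * (1 / ckappa x) =
        W x / (ckappa x)\<^sup>2"
      using ckappa_nonzero[of x] by (simp add: W_def field_simps power2_eq_square)
    ultimately show ?thesis by (simp add: W_zero)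
  qed
  then have "w x = R 0 * ckappa x" for x
    using has_vector_derivative_zero_constant[of R x 0] ckappa_nonzero[of x]
    by (simp add: R_def field_simps)
  then show ?thesis by blast
qed

lemma integrable_nondecreasing_eq_0:
  fixes F :: "real \<Rightarrow> real"
  assumes F: "integrable lebesgue F" and mono: "\<And>a b. a \<le> b \<Longrightarrow> F a \<le> F b"
  shows "F y = 0"
proof (cases "F y \<ge> 0")
  case True
  have "\<forall>x\<ge>y. F y \<le> norm (F x)"
    using mono by (auto intro: order_trans[OF _ abs_ge_self])
  then have "F y \<le> 0"
    using integrable_bounded_below_on_halfline[OF F] by blast
  with True show ?thesis by simp
next
  case False
  have "\<forall>x\<le>y. - F y \<le> norm (F x)"
    using mono by (auto intro: order_trans[OF _ abs_ge_minus_self])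
  then have "- F y \<le> 0"
    using integrable_bounded_below_on_halfline[OF F] by blast
  with False show ?thesis by simp
qed

text \<open>\<open>F = Im (conj z z')\<close> has derivative \<open>2 |z|\<^sup>2\<close>, so it is non-decreasing; being
  integrable, it vanishes identically, and then so does \<open>z\<close>.\<close>
lemma minus_mode_homogeneous:
  fixes z z1 :: "real \<Rightarrow> complex"
  assumes z: "L2 z" "L2 z1" "\<And>x. (z has_vector_derivative z1 x) (at x)"
    and z1: "\<And>x. (z1 has_vector_derivative (complex_of_real (rho x) + 2 * \<i>) * z x) (at x)"
  shows "z x = 0"
proof -
  define F where "F x = Im (cnj (z x) * z1 x)" for x
  have F_deriv: "(F has_real_derivative 2 * (norm (z x))\<^sup>2) (at x)" for x
  proof -
    have "((\<lambda>x. cnj (z x)) has_vector_derivative cnj (z1 x)) (at x)"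
      by (rule bounded_linear.has_vector_derivative[OF bounded_linear_cnj z(3)])
    from has_vector_derivative_mult[OF this z1]
    have "(F has_vector_derivative
        Im (cnj (z x) * ((complex_of_real (rho x) + 2 * \<i>) * z x) + cnj (z1 x) * z1 x)) (at x)"
      unfolding F_def[abs_def] by (rule bounded_linear.has_vector_derivative[OF bounded_linear_Im])
    moreover have "cnj (z x) * ((complex_of_real (rho x) + 2 * \<i>) * z x) + cnj (z1 x) * z1 x
        = (complex_of_real (rho x) + 2 * \<i>) * complex_of_real ((norm (z x))\<^sup>2)
          + complex_of_real ((norm (z1 x))\<^sup>2)"
    proof -
      have sq: "cnj (z x) * z x = complex_of_real ((norm (z x))\<^sup>2)"
        "cnj (z1 x) * z1 x = complex_of_real ((norm (z1 x))\<^sup>2)"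
        using complex_norm_square[of "z x"] complex_norm_square[of "z1 x"] by (simp_all add: mult.commute)
      show ?thesis by (simp only: sq[symmetric]) (simp add: algebra_simps)
    qed
    ultimately show ?thesis
      by (simp add: has_real_derivative_iff_has_vector_derivative)
  qed
  have mono: "F a \<le> F b" if "a \<le> b" for a b
  proof (rule DERIV_nonneg_imp_nondecreasing[OF that])
    show "\<exists>d. (F has_real_derivative d) (at x) \<and> 0 \<le> d" for x
      by (intro exI[of _ "2 * (norm (z x))\<^sup>2"] conjI F_deriv) simp
  qed
  have F_int: "integrable lebesgue F"
    unfolding F_def by (intro integrable_Im integrable_mult_L2 L2_cnj z)
  have F_zero: "F y = 0" for y
    by (rule integrable_nondecreasing_eq_0[OF F_int mono])
  have "F = (\<lambda>_. 0)"
    using F_zero by auto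
  then have "((\<lambda>_. 0) has_real_derivative 2 * (norm (z x))\<^sup>2) (at x)"
    using F_deriv[of x] by simp
  then have "2 * (norm (z x))\<^sup>2 = 0"
    using DERIV_const DERIV_unique by blast
  then show ?thesis by simp
qed

lemma H2_L2: "H2 f \<Longrightarrow> L2 f"
  by (simp add: H2_def)

lemma H2_derivative_L2:
  assumes "H2 f" "weak_dd f f1 f2"
  shows "L2 f1"
proof -
  obtain g1 g2 where g: "weak_dd f g1 g2" "L2 g1"
    using assms(1) by (auto simp: H2_def)
  have "g1 x = f1 x" for x
    using g(1) assms(2) unfolding weak_dd_def by (metis vector_derivative_unique_at)
  then show ?thesis
    using g(2) by (metis ext)
qed

lemma weak_dd_lincomb:
  assumes "weak_dd f f1 f2" "weak_dd g g1 g2"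
  shows "weak_dd (\<lambda>x. a * f x + b * g x) (\<lambda>x. a * f1 x + b * g1 x) (\<lambda>x. a * f2 x + b * g2 x)"
  using assms unfolding weak_dd_iff_has_primitive
  by (auto intro!: has_vector_derivative_add has_vector_derivative_mult_right
      has_primitive_add has_primitive_cmult)

definition plus_mode :: "cpair \<Rightarrow> real \<Rightarrow> complex" where
  "plus_mode u x = fst u x + \<i> * snd u x"

definition minus_mode :: "cpair \<Rightarrow> real \<Rightarrow> complex" where
  "minus_mode u x = fst u x - \<i> * snd u x"

lemma L2_modes:
  assumes "L2 (fst u)" "L2 (snd u)"
  shows "L2 (plus_mode u)" "L2 (minus_mode u)"
  using L2_lincomb[OF assms, of 1 "\<i>"] L2_lincomb[OF assms, of 1 "- \<i>"]
  by (simp_all add: plus_mode_def[abs_def] minus_mode_def[abs_def])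

lemma Ac_minus_i_modes:
  assumes "Ac_minus_i u v"
  obtains w1 z1 where
    "L2 (plus_mode u)" "L2 w1" "\<And>x. (plus_mode u has_vector_derivative w1 x) (at x)"
    "has_primitive (\<lambda>x. complex_of_real (rho x) * plus_mode u x + plus_mode v x) w1"
    "L2 (minus_mode u)" "L2 z1" "\<And>x. (minus_mode u has_vector_derivative z1 x) (at x)"
    "has_primitive (\<lambda>x. (complex_of_real (rho x) + 2 * \<i>) * minus_mode u x + minus_mode v x) z1"
proof -
  obtain \<phi>1 \<phi>2 \<psi>1 \<psi>2 where U: "u \<in> Uc"
    and \<phi>: "weak_dd (fst u) \<phi>1 \<phi>2" and \<psi>: "weak_dd (snd u) \<psi>1 \<psi>2"
    and eq: "AE x in lebesgue.
      fst v x = \<phi>2 x - snd u x - complex_of_real (rho x) * fst u x - \<i> * fst u x \<and>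
      snd v x = \<psi>2 x + fst u x - complex_of_real (rho x) * snd u x - \<i> * snd u x"
    using assms unfolding Ac_minus_i_def by auto
  have L2: "L2 (fst u)" "L2 (snd u)" "L2 \<phi>1" "L2 \<psi>1"
    using U H2_L2 H2_derivative_L2[OF _ \<phi>] H2_derivative_L2[OF _ \<psi>] by (auto simp: Uc_def)
  have "weak_dd (plus_mode u) (\<lambda>x. \<phi>1 x + \<i> * \<psi>1 x) (\<lambda>x. \<phi>2 x + \<i> * \<psi>2 x)"
    using weak_dd_lincomb[OF \<phi> \<psi>, of 1 "\<i>"] by (simp add: plus_mode_def[abs_def])
  moreover have "weak_dd (minus_mode u) (\<lambda>x. \<phi>1 x - \<i> * \<psi>1 x) (\<lambda>x. \<phi>2 x - \<i> * \<psi>2 x)"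
    using weak_dd_lincomb[OF \<phi> \<psi>, of 1 "- \<i>"] by (simp add: minus_mode_def[abs_def])
  moreover have "AE x in lebesgue.
      \<phi>2 x + \<i> * \<psi>2 x = complex_of_real (rho x) * plus_mode u x + plus_mode v x \<and>
      \<phi>2 x - \<i> * \<psi>2 x = (complex_of_real (rho x) + 2 * \<i>) * minus_mode u x + minus_mode v x"
    using eq
  proof eventually_elim
    case (elim x)
    then have "\<phi>2 x = fst v x + snd u x + complex_of_real (rho x) * fst u x + \<i> * fst u x"
      "\<psi>2 x = snd v x - fst u x + complex_of_real (rho x) * snd u x + \<i> * snd u x"
      by simp_all
    then show ?case
      unfolding plus_mode_def minus_mode_def by (simp only:) (simp add: algebra_simps)
  qed
  ultimately show ?thesis
    using L2 L2_modes[OF L2(1,2)] L2_lincomb[OF L2(3,4), of 1 "\<i>"] L2_lincomb[OF L2(3,4), of 1 "- \<i>"]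
    by (intro that[of "\<lambda>x. \<phi>1 x + \<i> * \<psi>1 x" "\<lambda>x. \<phi>1 x - \<i> * \<psi>1 x"])
      (auto simp: weak_dd_iff_has_primitive elim: has_primitive_AE_cong eventually_mono)
qed

lemma Ac_minus_i_of_modes:
  assumes v: "v \<in> Vc"
    and w: "L2 w" "L2 w1" "L2 w2" "weak_dd w w1 w2"
      "\<And>x. w2 x = complex_of_real (rho x) * w x + plus_mode v x"
    and z: "L2 z" "L2 z1" "L2 z2" "weak_dd z z1 z2"
      "\<And>x. z2 x = (complex_of_real (rho x) + 2 * \<i>) * z x + minus_mode v x"
  shows "Ac_minus_i (\<lambda>x. 1/2 * w x + 1/2 * z x, \<lambda>x. - \<i>/2 * w x + \<i>/2 * z x) v"
  unfolding Ac_minus_i_def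
proof (intro conjI exI)
  show "(\<lambda>x. 1/2 * w x + 1/2 * z x, \<lambda>x. - \<i>/2 * w x + \<i>/2 * z x) \<in> Uc"
  proof -
    have "H2 (\<lambda>x. a * w x + b * z x)" for a b
      unfolding H2_def using weak_dd_lincomb[OF w(4) z(4), of a b] L2_lincomb w(1-3) z(1-3) by blast
    from this[of "1/2" "1/2"] this[of "- \<i>/2" "\<i>/2"] show ?thesis
      by (simp add: Uc_def)
  qed
  show "v \<in> Vc" by fact
  show "weak_dd (fst (\<lambda>x. 1/2 * w x + 1/2 * z x, \<lambda>x. - \<i>/2 * w x + \<i>/2 * z x))
      (\<lambda>x. 1/2 * w1 x + 1/2 * z1 x) (\<lambda>x. 1/2 * w2 x + 1/2 * z2 x)"
    "weak_dd (snd (\<lambda>x. 1/2 * w x + 1/2 * z x, \<lambda>x. - \<i>/2 * w x + \<i>/2 * z x))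
      (\<lambda>x. - \<i>/2 * w1 x + \<i>/2 * z1 x) (\<lambda>x. - \<i>/2 * w2 x + \<i>/2 * z2 x)"
    unfolding fst_conv snd_conv by (rule weak_dd_lincomb[OF w(4) z(4)])+
  show "AE x in lebesgue.
      fst v x = 1/2 * w2 x + 1/2 * z2 x - snd (\<lambda>x. 1/2 * w x + 1/2 * z x, \<lambda>x. - \<i>/2 * w x + \<i>/2 * z x) x
        - complex_of_real (rho x) * fst (\<lambda>x. 1/2 * w x + 1/2 * z x, \<lambda>x. - \<i>/2 * w x + \<i>/2 * z x) x
        - \<i> * fst (\<lambda>x. 1/2 * w x + 1/2 * z x, \<lambda>x. - \<i>/2 * w x + \<i>/2 * z x) x \<and>
      snd v x = - \<i>/2 * w2 x + \<i>/2 * z2 x + fst (\<lambda>x. 1/2 * w x + 1/2 * z x, \<lambda>x. - \<i>/2 * w x + \<i>/2 * z x) x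
        - complex_of_real (rho x) * snd (\<lambda>x. 1/2 * w x + 1/2 * z x, \<lambda>x. - \<i>/2 * w x + \<i>/2 * z x) x
        - \<i> * snd (\<lambda>x. 1/2 * w x + 1/2 * z x, \<lambda>x. - \<i>/2 * w x + \<i>/2 * z x) x"
    unfolding w(5) z(5) plus_mode_def minus_mode_def by (simp add: field_simps)
qed

lemma kernel_modes:
  assumes "Ac_minus_i u zero_pair"
  obtains C where "\<And>x. plus_mode u x = C * ckappa x" "\<And>x. minus_mode u x = 0"
proof -
  obtain w1 z1 where
    w: "L2 (plus_mode u)" "L2 w1" "\<And>x. (plus_mode u has_vector_derivative w1 x) (at x)"
      "has_primitive (\<lambda>x. complex_of_real (rho x) * plus_mode u x + plus_mode zero_pair x) w1"
    and z: "L2 (minus_mode u)" "L2 z1" "\<And>x. (minus_mode u has_vector_derivative z1 x) (at x)"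
      "has_primitive (\<lambda>x. (complex_of_real (rho x) + 2 * \<i>) * minus_mode u x + minus_mode zero_pair x) z1"
    by (rule Ac_minus_i_modes[OF assms]) (rule that)
  have zero: "plus_mode zero_pair x = 0" "minus_mode zero_pair x = 0" for x
    by (simp_all add: plus_mode_def minus_mode_def zero_pair_def)
  have "(w1 has_vector_derivative complex_of_real (rho x) * plus_mode u x) (at x)" for x
  proof (rule has_primitive_has_vector_derivative)
    show "has_primitive (\<lambda>x. complex_of_real (rho x) * plus_mode u x) w1"
      by (rule has_primitive_cong[OF w(4)]) (simp_all add: zero)
    show "continuous_on UNIV (\<lambda>x. complex_of_real (rho x) * plus_mode u x)"
      by (intro continuous_intros continuous_on_rho continuous_on_has_vector_derivative[OF w(3)])
  qed
  then obtain C where "\<And>x. plus_mode u x = C * ckappa x"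
    using plus_mode_homogeneous[OF w(1-3)] by blast
  moreover have "(z1 has_vector_derivative (complex_of_real (rho x) + 2 * \<i>) * minus_mode u x) (at x)"
    for x
  proof (rule has_primitive_has_vector_derivative)
    show "has_primitive (\<lambda>x. (complex_of_real (rho x) + 2 * \<i>) * minus_mode u x) z1"
      by (rule has_primitive_cong[OF z(4)]) (simp_all add: zero)
    show "continuous_on UNIV (\<lambda>x. (complex_of_real (rho x) + 2 * \<i>) * minus_mode u x)"
      by (intro continuous_intros continuous_on_rho continuous_on_has_vector_derivative[OF z(3)])
  qed
  then have "minus_mode u x = 0" for x
    using minus_mode_homogeneous[OF z(1-3)] by blast
  ultimately show ?thesis
    using that by blast
qed

lemma Ac_minus_i_kappa_mode:
  "Ac_minus_i (\<lambda>x. c * ckappa x, \<lambda>x. - \<i> * c * ckappa x) zero_pair"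
proof -
  have dd: "weak_dd ckappa (\<lambda>x. complex_of_real (dkappa x)) (\<lambda>x. complex_of_real (rho x) * ckappa x)"
    unfolding weak_dd_iff_has_primitive
    by (intro conjI allI has_vector_derivative_ckappa has_primitive_of_derivative
        has_vector_derivative_dkappa)
  have L2: "L2 ckappa" "L2 (\<lambda>x. complex_of_real (dkappa x))"
    "L2 (\<lambda>x. complex_of_real (rho x) * ckappa x)"
    by (intro L2_ckappa L2_dkappa L2_rho_mult)+
  have zero: "plus_mode zero_pair x = 0" "minus_mode zero_pair x = 0" "zero_pair \<in> Vc" for x
    by (simp_all add: plus_mode_def minus_mode_def zero_pair_def Vc_def L2_zero)
  have "Ac_minus_i
      (\<lambda>x. 1/2 * (c * ckappa x + c * ckappa x) + 1/2 * (0 * ckappa x + 0 * ckappa x),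
       \<lambda>x. - \<i>/2 * (c * ckappa x + c * ckappa x) + \<i>/2 * (0 * ckappa x + 0 * ckappa x)) zero_pair"
    by (rule Ac_minus_i_of_modes[OF zero(3)
          L2_lincomb[OF L2(1) L2(1)] L2_lincomb[OF L2(2) L2(2)] L2_lincomb[OF L2(3) L2(3)]
          weak_dd_lincomb[OF dd dd] _
          L2_lincomb[OF L2(1) L2(1)] L2_lincomb[OF L2(2) L2(2)] L2_lincomb[OF L2(3) L2(3)]
          weak_dd_lincomb[OF dd dd]])
      (simp_all add: zero algebra_simps)
  moreover have "(\<lambda>x. 1/2 * (c * ckappa x + c * ckappa x) + 1/2 * (0 * ckappa x + 0 * ckappa x),
      \<lambda>x. - \<i>/2 * (c * ckappa x + c * ckappa x) + \<i>/2 * (0 * ckappa x + 0 * ckappa x)) =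
      (\<lambda>x. c * ckappa x, \<lambda>x. - \<i> * c * ckappa x)"
    by (simp add: fun_eq_iff field_simps)
  ultimately show ?thesis
    by simp
qed

lemma kernel_Ac_minus_i:
  "op_kernel Ac_minus_i = {(\<lambda>x. c * ckappa x, \<lambda>x. - \<i> * c * ckappa x) | c. True}"
proof (intro set_eqI iffI)
  fix u
  assume "u \<in> op_kernel Ac_minus_i"
  then have "Ac_minus_i u zero_pair"
    by (simp add: op_kernel_def)
  then obtain C where C: "\<And>x. plus_mode u x = C * ckappa x" "\<And>x. minus_mode u x = 0"
    by (rule kernel_modes) (rule that)
  have "fst u x = (plus_mode u x + minus_mode u x) / 2"
    "snd u x = - \<i> * (plus_mode u x - minus_mode u x) / 2" for x
    by (simp_all add: plus_mode_def minus_mode_def field_simps)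
  then have "u = (\<lambda>x. C / 2 * ckappa x, \<lambda>x. - \<i> * (C / 2) * ckappa x)"
    using C by (simp add: prod_eq_iff fun_eq_iff)
  then show "u \<in> {(\<lambda>x. c * ckappa x, \<lambda>x. - \<i> * c * ckappa x) | c. True}"
    by blast
next
  fix u
  assume "u \<in> {(\<lambda>x. c * ckappa x, \<lambda>x. - \<i> * c * ckappa x) | c. True}"
  then obtain c where "u = (\<lambda>x. c * ckappa x, \<lambda>x. - \<i> * c * ckappa x)"
    by blast
  then show "u \<in> op_kernel Ac_minus_i"
    using Ac_minus_i_kappa_mode[of c] by (simp add: op_kernel_def)
qed

definition kappa_pairing :: "cpair \<Rightarrow> complex" where
  "kappa_pairing v = (\<integral>x. ckappa x * plus_mode v x \<partial>lebesgue)"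

lemma range_Ac_minus_i: "op_range Ac_minus_i = {v \<in> Vc. kappa_pairing v = 0}"
proof (intro set_eqI iffI)
  fix v
  assume "v \<in> op_range Ac_minus_i"
  then obtain u where A: "Ac_minus_i u v"
    by (auto simp: op_range_def)
  then have v: "v \<in> Vc"
    by (simp add: Ac_minus_i_def)
  obtain w1 where "L2 (plus_mode u)" "L2 w1" "\<And>x. (plus_mode u has_vector_derivative w1 x) (at x)"
    "has_primitive (\<lambda>x. complex_of_real (rho x) * plus_mode u x + plus_mode v x) w1"
    using Ac_minus_i_modes[OF A] by metis
  from plus_mode_orthogonal[OF this] v show "v \<in> {v \<in> Vc. kappa_pairing v = 0}"
    by (simp add: kappa_pairing_def Vc_def L2_modes)
next
  fix v
  assume "v \<in> {v \<in> Vc. kappa_pairing v = 0}"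
  then have v: "v \<in> Vc" and orth: "(\<integral>x. ckappa x * plus_mode v x \<partial>lebesgue) = 0"
    by (simp_all add: kappa_pairing_def)
  have modes: "L2 (plus_mode v)" "L2 (minus_mode v)"
    using v by (simp_all add: Vc_def L2_modes)
  obtain w w1 w2 where "L2 w" "L2 w1" "L2 w2" "weak_dd w w1 w2"
    "\<And>x. w2 x = complex_of_real (rho x) * w x + plus_mode v x"
    using plus_mode_solvable[OF modes(1) orth] by blast
  moreover obtain z z1 z2 where "L2 z" "L2 z1" "L2 z2" "weak_dd z z1 z2"
    "\<And>x. z2 x = (complex_of_real (rho x) + 2 * \<i>) * z x + minus_mode v x"
    using minus_mode_solvable[OF modes(2)] by blast
  ultimately show "v \<in> op_range Ac_minus_i"
    unfolding op_range_def using Ac_minus_i_of_modes[OF v] by blast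
qed

lemma kappa_pairing_diff:
  assumes "v \<in> Vc" "v' \<in> Vc"
  shows "kappa_pairing v - kappa_pairing v' =
    (\<integral>x. ckappa x * (plus_mode v x - plus_mode v' x) \<partial>lebesgue)"
proof -
  have "integrable lebesgue (\<lambda>x. ckappa x * plus_mode v x)"
    "integrable lebesgue (\<lambda>x. ckappa x * plus_mode v' x)"
    using assms by (auto simp: Vc_def intro!: integrable_mult_L2 L2_ckappa L2_modes)
  then show ?thesis
    by (simp add: kappa_pairing_def algebra_simps)
qed

lemma norm_kappa_pairing_diff_le:
  assumes "v \<in> Vc" "v' \<in> Vc"
  shows "(norm (kappa_pairing v - kappa_pairing v'))\<^sup>2 \<le>
    (\<integral>x. (norm (ckappa x))\<^sup>2 \<partial>lebesgue) * (2 * l2dist2 v v')"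
proof -
  define d1 where "d1 x = fst v x - fst v' x" for x
  define d2 where "d2 x = snd v x - snd v' x" for x
  have d: "L2 d1" "L2 d2"
    using assms unfolding d1_def[abs_def] d2_def[abs_def] by (auto simp: Vc_def intro!: L2_diff)
  have "plus_mode v x - plus_mode v' x = d1 x + \<i> * d2 x" for x
    by (simp add: plus_mode_def d1_def d2_def algebra_simps)
  then have "(norm (kappa_pairing v - kappa_pairing v'))\<^sup>2 \<le>
      (\<integral>x. (norm (ckappa x))\<^sup>2 \<partial>lebesgue) * (\<integral>x. (norm (d1 x + \<i> * d2 x))\<^sup>2 \<partial>lebesgue)"
    using L2_Cauchy_Schwarz[OF L2_ckappa L2_lincomb[OF d, of 1 "\<i>"]]
    by (simp add: kappa_pairing_diff[OF assms])
  also have "(\<integral>x. (norm (d1 x + \<i> * d2 x))\<^sup>2 \<partial>lebesgue) \<le>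
      (\<integral>x. 2 * ((norm (d1 x))\<^sup>2 + (norm (d2 x))\<^sup>2) \<partial>lebesgue)"
  proof (rule integral_mono)
    show "integrable lebesgue (\<lambda>x. (norm (d1 x + \<i> * d2 x))\<^sup>2)"
      using L2_lincomb[OF d, of 1 "\<i>"] by (simp add: L2_def)
    show "integrable lebesgue (\<lambda>x. 2 * ((norm (d1 x))\<^sup>2 + (norm (d2 x))\<^sup>2))"
      using d by (simp add: L2_def)
    have "(norm (d1 x + \<i> * d2 x))\<^sup>2 \<le> (norm (d1 x) + norm (d2 x))\<^sup>2" for x
      using norm_triangle_ineq[of "d1 x" "\<i> * d2 x"] by (intro power_mono) (auto simp: norm_mult)
    moreover have "(norm (d1 x) + norm (d2 x))\<^sup>2 \<le> 2 * ((norm (d1 x))\<^sup>2 + (norm (d2 x))\<^sup>2)" for x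
      using zero_le_power2[of "norm (d1 x) - norm (d2 x)"] by (simp add: power2_sum power2_diff)
    ultimately show "(norm (d1 x + \<i> * d2 x))\<^sup>2 \<le> 2 * ((norm (d1 x))\<^sup>2 + (norm (d2 x))\<^sup>2)" for x
      by (rule order_trans)
  qed
  also have "\<dots> = 2 * l2dist2 v v'"
    by (simp only: l2dist2_def d1_def d2_def integral_mult_right_zero)
  finally show ?thesis
    by (simp add: mult_left_mono)
qed

lemma L2_closed_range: "L2_closed (op_range Ac_minus_i) Vc"
  unfolding L2_closed_def
proof (intro ballI allI impI)
  fix v s
  assume v: "v \<in> Vc" and s: "(\<forall>n. s n \<in> op_range Ac_minus_i) \<and> (\<lambda>n. l2dist2 (s n) v) \<longlonglongrightarrow> 0"
  then have s_range: "s n \<in> Vc" "kappa_pairing (s n) = 0" for n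
    by (auto simp: range_Ac_minus_i)
  define K where "K = (\<integral>x. (norm (ckappa x))\<^sup>2 \<partial>lebesgue)"
  have "(norm (kappa_pairing v))\<^sup>2 \<le> K * (2 * l2dist2 (s n) v)" for n
    using norm_kappa_pairing_diff_le[OF s_range(1) v, of n] s_range(2)[of n] by (simp add: K_def)
  moreover have "(\<lambda>n. K * (2 * l2dist2 (s n) v)) \<longlonglongrightarrow> K * (2 * 0)"
    using s by (intro tendsto_mult tendsto_const) auto
  ultimately have "(norm (kappa_pairing v))\<^sup>2 \<le> K * (2 * 0)"
    by (intro LIMSEQ_le_const) auto
  then show "v \<in> op_range Ac_minus_i"
    using v by (simp add: range_Ac_minus_i)
qed

lemma integral_ckappa_sq_nonzero: "(\<integral>x. ckappa x * ckappa x \<partial>lebesgue) \<noteq> 0"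
proof
  assume "(\<integral>x. ckappa x * ckappa x \<partial>lebesgue) = 0"
  then have "(\<integral>x. kappa x * kappa x \<partial>lebesgue) = 0"
    by (simp add: ckappa_def flip: of_real_mult)
  moreover have "integrable lebesgue (\<lambda>x. kappa x * kappa x)"
    using L2_integrable_square[OF L2_ckappa] by (simp add: ckappa_def power2_eq_square)
  ultimately have "AE x in lebesgue. kappa x * kappa x = 0"
    by (simp add: integral_nonneg_eq_0_iff_AE)
  then have "AE x::real in lebesgue. False"
  proof eventually_elim
    case (elim x)
    then show False using kappa_pos[of x] by simp
  qed
  then show False
    using ae_filter_eq_bot_iff[of "lebesgue :: real measure"] by (simp add: eventually_False)
qed

lemma kernel_dim_1: "has_dim (op_kernel Ac_minus_i) 1"
  unfolding has_dim_def kernel_Ac_minus_i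
proof (intro exI[of _ "\<lambda>j. (ckappa, \<lambda>x. - \<i> * ckappa x)"] conjI allI impI ballI)
  show "(ckappa, \<lambda>x. - \<i> * ckappa x) \<in> {(\<lambda>x. c * ckappa x, \<lambda>x. - \<i> * c * ckappa x) | c. True}"
    by (intro CollectI exI[of _ 1]) simp
  fix u
  assume "u \<in> {(\<lambda>x. c * ckappa x, \<lambda>x. - \<i> * c * ckappa x) | c. True}"
  then obtain c where "u = (\<lambda>x. c * ckappa x, \<lambda>x. - \<i> * c * ckappa x)"
    by blast
  then show "\<exists>c. u = lincomb c (\<lambda>j. (ckappa, \<lambda>x. - \<i> * ckappa x)) 1"
    by (intro exI[of _ "\<lambda>_. c"]) (simp add: lincomb_def mult_ac)
next
  fix c :: "nat \<Rightarrow> complex" and j :: nat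
  assume "lincomb c (\<lambda>j. (ckappa, \<lambda>x. - \<i> * ckappa x)) 1 = zero_pair" "j < 1"
  then show "c j = 0"
    using ckappa_nonzero[of 0] by (auto simp: lincomb_def zero_pair_def fun_eq_iff)
qed

lemma kappa_pairing_kappa:
  "kappa_pairing (lincomb c (\<lambda>j. (ckappa, \<lambda>x. 0)) 1) = c 0 * (\<integral>x. ckappa x * ckappa x \<partial>lebesgue)"
proof -
  have "kappa_pairing (lincomb c (\<lambda>j. (ckappa, \<lambda>x. 0)) 1) =
      (\<integral>x. c 0 * (ckappa x * ckappa x) \<partial>lebesgue)"
    by (simp add: kappa_pairing_def plus_mode_def lincomb_def mult_ac)
  then show ?thesis by simp
qed

lemma range_codim_1: "has_codim (op_range Ac_minus_i) Vc 1"
  unfolding has_codim_def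
proof (intro exI[of _ "\<lambda>j. (ckappa, \<lambda>x. 0)"] conjI allI impI ballI)
  define N where "N = (\<integral>x. ckappa x * ckappa x \<partial>lebesgue)"
  show "(ckappa, \<lambda>x. 0) \<in> Vc"
    by (simp add: Vc_def L2_ckappa L2_zero)
  fix v
  assume v: "v \<in> Vc"
  define c where "c = kappa_pairing v / N"
  define r where "r = (\<lambda>x. fst v x - c * ckappa x, snd v)"
  have r: "r \<in> Vc"
    using v by (auto simp: r_def Vc_def intro!: L2_diff L2_cmult L2_ckappa)
  have "kappa_pairing v - kappa_pairing r = (\<integral>x. c * (ckappa x * ckappa x) \<partial>lebesgue)"
    unfolding kappa_pairing_diff[OF v r] by (simp add: r_def plus_mode_def mult_ac)
  also have "\<dots> = c * N"
    by (simp add: N_def)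
  finally have "kappa_pairing v - kappa_pairing r = c * N" .
  then have "kappa_pairing r = 0"
    using integral_ckappa_sq_nonzero by (simp add: c_def N_def)
  then have "r \<in> op_range Ac_minus_i"
    using r by (simp add: range_Ac_minus_i)
  then show "\<exists>c. \<exists>r\<in>op_range Ac_minus_i. AE x in lebesgue.
      fst v x = fst r x + fst (lincomb c (\<lambda>j. (ckappa, \<lambda>x. 0)) 1) x \<and>
      snd v x = snd r x + snd (lincomb c (\<lambda>j. (ckappa, \<lambda>x. 0)) 1) x"
    by (intro exI[of _ "\<lambda>_. c"] bexI[of _ r]) (auto simp: r_def lincomb_def)
next
  fix c :: "nat \<Rightarrow> complex" and j :: nat
  assume "lincomb c (\<lambda>j. (ckappa, \<lambda>x. 0)) 1 \<in> op_range Ac_minus_i" "j < 1"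
  then show "c j = 0"
    using integral_ckappa_sq_nonzero kappa_pairing_kappa[of c] by (simp add: range_Ac_minus_i)
qed

theorem lemma5p2:
  shows "(fredholm Ac_minus_i Uc Vc \<and> fredholm_index Ac_minus_i Vc 0) \<and>
         op_kernel Ac_minus_i =
           {(\<lambda>x. c * complex_of_real (kappa x), \<lambda>x. - \<i> * c * complex_of_real (kappa x)) | c. True}"
proof (intro conjI)
  show "fredholm Ac_minus_i Uc Vc"
    unfolding fredholm_def using kernel_dim_1 L2_closed_range range_codim_1
    by (auto simp: Ac_minus_i_def)
  show "fredholm_index Ac_minus_i Vc 0"
    unfolding fredholm_index_def using kernel_dim_1 range_codim_1 by force
  show "op_kernel Ac_minus_i =
      {(\<lambda>x. c * complex_of_real (kappa x), \<lambda>x. - \<i> * c * complex_of_real (kappa x)) | c. True}"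
    using kernel_Ac_minus_i by (simp add: ckappa_def)
qed

end
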